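(* Let $\mathbb{T}=\mathbb{R}/2\pi\mathbb{Z}$. For $j=1,\dots,m$ let $c_j\in C^\infty(\mathbb{T};\mathbb{C})$ and let $P_j(D_x)$ be a pseudo-differential operator on $\mathbb{T}^n$, $P_j(D_x)u(x)=\sum_{\xi\in\mathbb{Z}^n}e^{ix\cdot\xi}p_j(\xi)\widehat{u}(\xi)$, with $|p_j(\xi)|\le C|\xi|^{\nu_j}$ for all $\xi\in\mathbb{Z}^n$ (some $C>0$, $\nu_j\in\mathbb{R}$). Let $L_j=D_t+c_j(t)P_j(D_x)$ on $\mathbb{T}^{n+1}$, $c_{0,j}=(2\pi)^{-1}\int_0^{2\pi}c_j(t)\,dt$, $L_{0,j}=D_t+c_{0,j}P_j(D_x)$, $L_0=\prod_{j=1}^mL_{0,j}$, and for a permutation $\rho$ of $\{1,\dots,m\}$ let $L_\rho=L_{\rho(1)}\circ\cdots\circ L_{\rho(m)}$. Let $\mathcal{M}_{0,j}(\xi)=(2\pi)^{-1}\int_0^{2\pi}c_j(t)p_j(\xi)\,dt$ and $Z_{\mathcal{M}_j}=\{\xi\in\mathbb{Z}^n:\mathcal{M}_{0,j}(\xi)\in\mathbb{Z}\}$. (a) If $L_\rho$ is globally hypoelliptic for every permutation $\rho$, then $L_0$ is globally hypoelliptic; in particular all sets $Z_{\mathcal{M}_k}$, $k=1,\dots,m$, are finite. (b) If $L_\rho$ is globally hypoelliptic for some permutation $\rho$, then at least one of the operators $L_{0,k}$ is globally hypoelliptic.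
   Context: $D_t=-i\partial_t$; $\widehat{u}(\xi)=(2\pi)^{-n}\int_{\mathbb{T}^n}e^{-ix\cdot\xi}u(x)\,dx$. An operator $\mathcal{P}$ on $\mathbb{T}^N$ is globally hypoelliptic if $u\in\mathcal{D}'(\mathbb{T}^N)$ and $\mathcal{P}u\in C^\infty(\mathbb{T}^N)$ imply $u\in C^\infty(\mathbb{T}^N)$. *)

theory Defs
  imports "HOL-Analysis.Analysis"
begin

text \<open>Distributions on the torus T^(n+1) (variables (t,x), t in T, x in T^n) are
represented by their Fourier coefficients, indexed by (tau, xi) in Z x Z^n.
A coefficient family represents a distribution iff it has polynomial growth,
and a smooth function iff it decays rapidly.\<close>

type_synonym ('n) coef = "int \<times> (int ^ ('n::finite)) \<Rightarrow> complex"

definition inorm :: "int ^ ('n::finite) \<Rightarrow> real" where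
  "inorm \<xi> = sqrt (\<Sum>i\<in>UNIV. (real_of_int (\<xi> $ i))\<^sup>2)"

definition fnorm :: "int \<times> (int ^ ('n::finite)) \<Rightarrow> real" where
  "fnorm \<eta> = sqrt ((real_of_int (fst \<eta>))\<^sup>2 + (inorm (snd \<eta>))\<^sup>2)"

definition is_distribution :: "('n::finite) coef \<Rightarrow> bool" where
  "is_distribution u \<longleftrightarrow> (\<exists>C (k::nat). \<forall>\<eta>. cmod (u \<eta>) \<le> C * (1 + fnorm \<eta>) ^ k)"

definition is_smooth :: "('n::finite) coef \<Rightarrow> bool" where
  "is_smooth u \<longleftrightarrow> (\<forall>k::nat. \<exists>C. \<forall>\<eta>. cmod (u \<eta>) \<le> C * (1 + fnorm \<eta>) powr (- real k))"

definition globally_hypoelliptic :: "(('n::finite) coef \<Rightarrow> ('n::finite) coef) \<Rightarrow> bool" where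
  "globally_hypoelliptic P \<longleftrightarrow>
     (\<forall>u. is_distribution u \<longrightarrow> is_smooth (P u) \<longrightarrow> is_smooth u)"

definition vderiv :: "(real \<Rightarrow> complex) \<Rightarrow> real \<Rightarrow> complex" where
  "vderiv f = (\<lambda>t. vector_derivative f (at t))"

definition smooth_periodic :: "(real \<Rightarrow> complex) \<Rightarrow> bool" where
  "smooth_periodic c \<longleftrightarrow> (\<forall>t. c (t + 2 * pi) = c t) \<and>
     (\<forall>k t. (vderiv ^^ k) c differentiable (at t))"

definition fcoef :: "(real \<Rightarrow> complex) \<Rightarrow> int \<Rightarrow> complex" where
  "fcoef c k = complex_of_real (1 / (2 * pi)) *
      integral {0..2 * pi} (\<lambda>t. exp (- \<i> * of_int k * of_real t) * c t)"

definition mean :: "(real \<Rightarrow> complex) \<Rightarrow> complex" where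
  "mean c = complex_of_real (1 / (2 * pi)) * integral {0..2 * pi} c"

definition Dt :: "('n::finite) coef \<Rightarrow> ('n::finite) coef" where
  "Dt u = (\<lambda>(\<tau>, \<xi>). of_int \<tau> * u (\<tau>, \<xi>))"

definition PDx :: "(int ^ ('n::finite) \<Rightarrow> complex) \<Rightarrow> ('n::finite) coef \<Rightarrow> ('n::finite) coef" where
  "PDx p u = (\<lambda>(\<tau>, \<xi>). p \<xi> * u (\<tau>, \<xi>))"

definition mult_t :: "(real \<Rightarrow> complex) \<Rightarrow> ('n::finite) coef \<Rightarrow> ('n::finite) coef" where
  "mult_t c u = (\<lambda>(\<tau>, \<xi>). infsum (\<lambda>\<sigma>. fcoef c (\<tau> - \<sigma>) * u (\<sigma>, \<xi>)) UNIV)"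

definition Lop :: "(real \<Rightarrow> complex) \<Rightarrow> (int ^ ('n::finite) \<Rightarrow> complex) \<Rightarrow> ('n::finite) coef \<Rightarrow> ('n::finite) coef" where
  "Lop c p u = (\<lambda>\<eta>. Dt u \<eta> + mult_t c (PDx p u) \<eta>)"

definition L0op :: "(real \<Rightarrow> complex) \<Rightarrow> (int ^ ('n::finite) \<Rightarrow> complex) \<Rightarrow> ('n::finite) coef \<Rightarrow> ('n::finite) coef" where
  "L0op c p u = (\<lambda>\<eta>. Dt u \<eta> + mean c * PDx p u \<eta>)"

definition comp_list :: "('a \<Rightarrow> 'a) list \<Rightarrow> 'a \<Rightarrow> 'a" where
  "comp_list fs = foldr (\<circ>) fs id"

end

theory Submission
  imports Defs
begin

text \<open>If an operator \<open>A\<close> of finite order makes \<open>A \<circ> L\<close> globally hypoelliptic, then \<open>L\<close> is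
  globally hypoelliptic; a permutation brings any \<open>L\<^sub>j\<close> to the right end of \<open>L\<^sub>\<rho>\<close>, and a
  composition of globally hypoelliptic operators of finite order is globally hypoelliptic. The heart
  of the matter is that global hypoellipticity of \<open>L = D\<^sub>t + c(t) P(D\<^sub>x)\<close> implies that of
  \<open>L\<^sub>0 = D\<^sub>t + c\<^sub>0 P(D\<^sub>x)\<close>. Otherwise the symbol \<open>\<tau> + c\<^sub>0 p(\<xi>)\<close> of \<open>L\<^sub>0\<close> is rapidly small along a
  sequence \<open>(\<tau>\<^sub>k, \<xi>\<^sub>k)\<close> with \<open>\<bar>\<xi>\<^sub>k\<bar> \<rightarrow> \<infinity>\<close>. For \<open>q = p(\<xi>\<^sub>k)\<close> the function
  \<open>W\<^sub>k(t) = exp(i \<tau>\<^sub>k t - i q \<integral>\<^sub>0\<^sup>t (c - c\<^sub>0))\<close>, normalised to \<open>max \<bar>W\<^sub>k\<bar> = 1\<close>, solves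
  \<open>(D\<^sub>t + q c(t)) W\<^sub>k = (\<tau>\<^sub>k + c\<^sub>0 q) W\<^sub>k\<close>. Placing the Fourier coefficients of \<open>W\<^sub>k\<close> at frequency
  \<open>\<xi>\<^sub>k\<close> gives a distribution \<open>v\<close> with \<open>L v\<close> smooth, because the coefficients of \<open>W\<^sub>k\<close> decay away
  from \<open>\<tau>\<^sub>k\<close> with constants polynomial in \<open>q\<close>; but \<open>v\<close> is not smooth, because some coefficient of
  \<open>W\<^sub>k\<close> is at least a negative power of \<open>1 + \<bar>q\<bar>\<close>. Finally, a globally hypoelliptic \<open>L\<^sub>0\<close> has
  only finitely many \<open>\<xi>\<close> with \<open>c\<^sub>0 p(\<xi>) \<in> \<int>\<close>, as it annihilates the indicator of
  \<open>{(-c\<^sub>0 p(\<xi>), \<xi>)}\<close>.\<close>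

section \<open>Fourier coefficients on the circle\<close>

definition expi :: "int \<Rightarrow> real \<Rightarrow> complex" where
  "expi k t = exp (\<i> * of_int k * of_real t)"

lemma continuous_on_expi[continuous_intros]: "continuous_on S (expi k)"
  unfolding expi_def by (intro continuous_intros)

lemma norm_expi[simp]: "norm (expi k t) = 1"
  unfolding expi_def by (simp add: norm_exp_i_times[of "of_int k * t", simplified mult.assoc[symmetric]])

lemma expi_mult: "expi k t * expi l t = expi (k + l) t"
  unfolding expi_def by (simp add: exp_add[symmetric] algebra_simps)

lemma expi_2pi[simp]: "expi k (2 * pi) = 1"
  unfolding expi_def by (simp add: mult.commute mult.left_commute)

lemma expi_0[simp]: "expi k 0 = 1" "expi 0 t = 1"
  unfolding expi_def by simp_all

lemma expi_0_fun: "expi 0 = (\<lambda>_. 1)" by (auto simp: expi_def)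

lemma fcoef_eq_integral_expi: "fcoef f k = of_real (1/(2*pi)) * integral {0..2*pi} (\<lambda>t. expi (-k) t * f t)"
  unfolding fcoef_def expi_def by simp

lemma expi_has_vector_derivative: "((expi k) has_vector_derivative (\<i> * of_int k * expi k t)) (at t within S)"
proof -
  have e: "expi k = (\<lambda>t. exp (t *\<^sub>R (\<i> * of_int k)))"
    by (auto simp: expi_def scaleR_conv_of_real mult_ac)
  show ?thesis unfolding e
    using exp_scaleR_has_vector_derivative_right[of "\<i> * of_int k" t S] by (simp add: mult_ac)
qed

lemma expi_has_integral: "((expi m) has_integral (if m = 0 then 2 * pi else 0)) {0..2*pi}"
proof (cases "m = 0")
  case True
  then show ?thesis using has_integral_const_real[of "1::complex" 0 "2*pi"] by (simp add: expi_0_fun scaleR_conv_of_real)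
next
  case False
  have "((\<lambda>t. expi m t / (\<i> * of_int m)) has_vector_derivative expi m t) (at t within {0..2*pi})" for t
    using has_vector_derivative_divide[OF expi_has_vector_derivative[of m t "{0..2*pi}"], of "\<i> * of_int m"] False
    by simp
  from fundamental_theorem_of_calculus[OF _ this] False show ?thesis by simp
qed

lemma integrable_expi_mult: "continuous_on {0..2*pi} f \<Longrightarrow> (\<lambda>t. expi k t * f t) integrable_on {0..2*pi}"
  by (intro integrable_continuous_real continuous_intros)

lemma continuous_on_period_bounded:
  assumes "continuous_on {0..2*pi} w"
  obtains W where "W \<ge> 0" "\<And>t. t \<in> {0..2*pi} \<Longrightarrow> norm (w t) \<le> W"
proof -
  obtain W where W: "\<And>t. t \<in> {0..2*pi} \<Longrightarrow> norm (w t) \<le> W"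
    using compact_imp_bounded[OF compact_continuous_image[OF assms compact_Icc]]
    unfolding bounded_iff by (metis image_eqI)
  have "W \<ge> 0" using W[of 0] by (auto intro: order_trans[OF norm_ge_zero])
  then show ?thesis using W that by blast
qed

lemma norm_fcoef_le:
  assumes "continuous_on {0..2*pi} f" "\<And>t. t \<in> {0..2*pi} \<Longrightarrow> norm (f t) \<le> B"
  shows "norm (fcoef f k) \<le> B"
proof -
  have B: "0 \<le> B" using assms(2)[of 0] by (auto intro: order_trans[OF norm_ge_zero])
  have "norm (integral {0..2*pi} (\<lambda>t. expi (-k) t * f t)) \<le> B * (2*pi)"
    using has_integral_bound_real[OF B finite.emptyI integrable_integral[OF integrable_expi_mult[OF assms(1)]]]
    by (auto simp: norm_mult assms(2))
  then show ?thesis unfolding fcoef_eq_integral_expi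
    by (simp add: norm_mult norm_divide field_simps)
qed

lemma fcoef_diff: "continuous_on {0..2*pi} f \<Longrightarrow> continuous_on {0..2*pi} g \<Longrightarrow>
   fcoef (\<lambda>t. f t - g t) k = fcoef f k - fcoef g k"
  unfolding fcoef_eq_integral_expi by (simp add: right_diff_distrib integral_diff integrable_expi_mult)

lemma fcoef_cmult: "fcoef (\<lambda>t. a * f t) k = a * fcoef f k"
  unfolding fcoef_eq_integral_expi by (simp add: mult.left_commute[of _ a])

lemma fcoef_sum: "finite F \<Longrightarrow> (\<And>i. i \<in> F \<Longrightarrow> continuous_on {0..2*pi} (f i)) \<Longrightarrow>
   fcoef (\<lambda>t. \<Sum>i\<in>F. f i t) k = (\<Sum>i\<in>F. fcoef (f i) k)"
  unfolding fcoef_eq_integral_expi by (simp add: sum_distrib_left integral_sum integrable_expi_mult)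

lemma fcoef_expi_mult: "fcoef (\<lambda>t. expi j t * f t) k = fcoef f (k - j)"
  unfolding fcoef_eq_integral_expi by (simp add: mult.assoc[symmetric] expi_mult)

lemma fcoef_expi: "fcoef (expi j) k = (if j = k then 1 else 0)"
proof -
  have "fcoef (expi j) k = of_real (1/(2*pi)) * integral {0..2*pi} (expi (j - k))"
    unfolding fcoef_eq_integral_expi by (simp add: expi_mult)
  also have "\<dots> = (if j = k then 1 else 0)"
    using expi_has_integral[of "j-k"] by (simp add: integral_unique)
  finally show ?thesis .
qed

lemma fcoef_derivative:
  assumes der: "\<And>t. t \<in> {0..2*pi} \<Longrightarrow> (f has_vector_derivative f' t) (at t within {0..2*pi})"
    and cf': "continuous_on {0..2*pi} f'" and per: "f 0 = f (2*pi)"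
  shows "fcoef f' k = \<i> * of_int k * fcoef f k"
proof -
  have cf: "continuous_on {0..2*pi} f"
    using der by (meson continuous_on_vector_derivative)
  have "((\<lambda>t. expi (-k) t * f t) has_vector_derivative
          (expi (-k) t * f' t + (\<i> * of_int (-k) * expi (-k) t) * f t)) (at t within {0..2*pi})"
    if "t \<in> {0..2*pi}" for t
    by (rule has_vector_derivative_mult[OF expi_has_vector_derivative der[OF that]])
  from fundamental_theorem_of_calculus[OF _ this] per
  have "((\<lambda>t. expi (-k) t * f' t + (\<i> * of_int (-k) * expi (-k) t) * f t) has_integral 0) {0..2*pi}"
    by simp
  then have "integral {0..2*pi} (\<lambda>t. expi (-k) t * f' t + (\<i> * of_int (-k)) * (expi (-k) t * f t)) = 0"
    by (simp add: integral_unique mult.assoc)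
  then have "integral {0..2*pi} (\<lambda>t. expi (-k) t * f' t) + (\<i> * of_int (-k)) * integral {0..2*pi} (\<lambda>t. expi (-k) t * f t) = 0"
    by (subst (asm) integral_add) (auto intro!: integrable_expi_mult cf cf' integrable_on_mult_right integrable_neg simp: integral_mult_right)
  then show ?thesis unfolding fcoef_eq_integral_expi by (simp add: algebra_simps)
qed

section \<open>Trigonometric polynomials and uniqueness of Fourier coefficients\<close>

definition trig_poly :: "(real \<Rightarrow> complex) \<Rightarrow> bool" where
  "trig_poly \<phi> \<longleftrightarrow> (\<exists>K a. finite K \<and> (\<forall>t. \<phi> t = (\<Sum>k\<in>K. a k * expi k t)))"

lemma trig_poly_expi: "trig_poly (\<lambda>t. a * expi k t)"
  unfolding trig_poly_def by (rule exI[of _ "{k}"], rule exI[of _ "\<lambda>_. a"]) simp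

lemma trig_poly_const: "trig_poly (\<lambda>t. a)"
  using trig_poly_expi[of a 0] by simp

lemma trig_poly_add: assumes "trig_poly \<phi>" "trig_poly \<psi>" shows "trig_poly (\<lambda>t. \<phi> t + \<psi> t)"
proof -
  obtain K a where K: "finite K" "\<And>t. \<phi> t = (\<Sum>k\<in>K. a k * expi k t)" using assms(1) unfolding trig_poly_def by blast
  obtain L b where L: "finite L" "\<And>t. \<psi> t = (\<Sum>k\<in>L. b k * expi k t)" using assms(2) unfolding trig_poly_def by blast
  define a' where "a' k = (if k \<in> K then a k else 0)" for k
  define b' where "b' k = (if k \<in> L then b k else 0)" for k
  have fin: "finite (K \<union> L)" using K L by simp
  have 1: "(\<Sum>k\<in>K. a k * expi k t) = (\<Sum>k\<in>K \<union> L. a' k * expi k t)" for t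
    by (rule sum.mono_neutral_cong_left[OF fin]) (auto simp: a'_def)
  have 2: "(\<Sum>k\<in>L. b k * expi k t) = (\<Sum>k\<in>K \<union> L. b' k * expi k t)" for t
    by (rule sum.mono_neutral_cong_left[OF fin]) (auto simp: b'_def)
  have "\<phi> t + \<psi> t = (\<Sum>k\<in>K \<union> L. (a' k + b' k) * expi k t)" for t
    unfolding K(2) L(2) 1 2 by (simp add: sum.distrib distrib_right)
  then show ?thesis unfolding trig_poly_def using fin
    by (intro exI[where x="K \<union> L"] exI[where x="\<lambda>k. a' k + b' k"]) auto
qed

lemma trig_poly_sum: "finite F \<Longrightarrow> (\<And>i. i \<in> F \<Longrightarrow> trig_poly (f i)) \<Longrightarrow> trig_poly (\<lambda>t. \<Sum>i\<in>F. f i t)"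
  by (induction F rule: finite_induct) (auto intro: trig_poly_add trig_poly_const)

lemma trig_poly_expi_mult: assumes "trig_poly \<psi>" shows "trig_poly (\<lambda>t. a * expi j t * \<psi> t)"
proof -
  obtain L b where L: "finite L" "\<And>t. \<psi> t = (\<Sum>k\<in>L. b k * expi k t)" using assms unfolding trig_poly_def by blast
  have "a * expi j t * \<psi> t = (\<Sum>k\<in>L. (a * b k) * expi (j + k) t)" for t
    by (simp add: L(2) sum_distrib_left expi_mult[symmetric] mult_ac)
  then show ?thesis
    using trig_poly_sum[OF L(1), of "\<lambda>k t. (a * b k) * expi (j + k) t"] trig_poly_expi by simp
qed

lemma trig_poly_mult: assumes "trig_poly \<phi>" "trig_poly \<psi>" shows "trig_poly (\<lambda>t. \<phi> t * \<psi> t)"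
proof -
  obtain K a where K: "finite K" "\<And>t. \<phi> t = (\<Sum>k\<in>K. a k * expi k t)" using assms(1) unfolding trig_poly_def by blast
  have "\<phi> t * \<psi> t = (\<Sum>k\<in>K. a k * expi k t * \<psi> t)" for t
    by (simp add: K(2) sum_distrib_right)
  then show ?thesis using trig_poly_sum[OF K(1), of "\<lambda>k t. a k * expi k t * \<psi> t"] trig_poly_expi_mult[OF assms(2)] by simp
qed

lemma trig_poly_linear_cis:
  fixes f :: "complex \<Rightarrow> real"
  assumes "linear f"
  shows "trig_poly (\<lambda>t. complex_of_real (f (cis t)))"
proof -
  define a b :: complex where "a = of_real (f 1) / 2" and "b = of_real (f \<i>) / (2 * \<i>)"
  have f_cis: "f (cis t) = cos t * f 1 + sin t * f \<i>" for t
  proof -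
    have "cis t = cos t *\<^sub>R 1 + sin t *\<^sub>R \<i>" by (simp add: complex_eq_iff)
    then show ?thesis by (simp only: linear_add[OF assms] linear_scale[OF assms]) simp
  qed
  have cos_eq: "complex_of_real (cos t) = (expi 1 t + expi (-1) t) / 2"
    and sin_eq: "complex_of_real (sin t) = (expi 1 t - expi (-1) t) / (2 * \<i>)" for t
    unfolding expi_def cos_of_real[symmetric] sin_of_real[symmetric] cos_exp_eq sin_exp_eq by simp_all
  have "complex_of_real (f (cis t)) = (a + b) * expi 1 t + (a - b) * expi (-1) t" for t
  proof -
    have "complex_of_real (f (cis t)) = of_real (cos t) * of_real (f 1) + of_real (sin t) * of_real (f \<i>)"
      by (simp add: f_cis)
    also have "\<dots> = (a + b) * expi 1 t + (a - b) * expi (-1) t"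
      unfolding cos_eq sin_eq a_def b_def by (simp add: field_simps)
    finally show ?thesis .
  qed
  then show ?thesis
    by (simp add: trig_poly_add trig_poly_expi)
qed

lemma trig_poly_real_polynomial_cis:
  fixes q :: "complex \<Rightarrow> real"
  assumes "real_polynomial_function q"
  shows "trig_poly (\<lambda>t. complex_of_real (q (cis t)))"
  using assms
proof (induction q rule: real_polynomial_function.induct)
  case (linear f)
  then show ?case by (intro trig_poly_linear_cis bounded_linear.linear)
qed (simp_all add: trig_poly_const trig_poly_add trig_poly_mult)

lemma trig_poly_polynomial_cis:
  fixes P :: "complex \<Rightarrow> complex"
  assumes "polynomial_function P"
  shows "trig_poly (\<lambda>t. P (cis t))"
proof -
  have "real_polynomial_function (Re o P)" "real_polynomial_function (Im o P)"
    using assms bounded_linear_Re bounded_linear_Im unfolding polynomial_function_def by blast+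
  from trig_poly_real_polynomial_cis[OF this(1)] trig_poly_real_polynomial_cis[OF this(2)]
  have "trig_poly (\<lambda>t. complex_of_real (Re (P (cis t))) + \<i> * complex_of_real (Im (P (cis t))))"
    by (intro trig_poly_add trig_poly_mult trig_poly_const) auto
  moreover have "complex_of_real (Re z) + \<i> * complex_of_real (Im z) = z" for z
    by (simp add: complex_eq_iff)
  ultimately show ?thesis by simp
qed

lemma integral_expi_mult_eq_fcoef: "integral {0..2*pi} (\<lambda>t. expi k t * h t) = 2 * pi * fcoef h (-k)"
  unfolding fcoef_eq_integral_expi by simp

lemma integral_trig_poly_mult_eq_0:
  assumes h: "continuous_on {0..2*pi} h" and z: "\<And>k. fcoef h k = 0" and "trig_poly \<phi>"
  shows "integral {0..2*pi} (\<lambda>t. \<phi> t * h t) = 0"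
proof -
  obtain K a where K: "finite K" "\<And>t. \<phi> t = (\<Sum>k\<in>K. a k * expi k t)" using assms(3) unfolding trig_poly_def by blast
  have "integral {0..2*pi} (\<lambda>t. \<phi> t * h t) = integral {0..2*pi} (\<lambda>t. \<Sum>k\<in>K. a k * (expi k t * h t))"
    by (simp add: K(2) sum_distrib_right mult.assoc)
  also have "\<dots> = (\<Sum>k\<in>K. integral {0..2*pi} (\<lambda>t. a k * (expi k t * h t)))"
    by (rule integral_sum[OF K(1)]) (auto intro!: integrable_on_mult_right integrable_expi_mult h)
  also have "\<dots> = 0"
    by (simp add: integral_expi_mult_eq_fcoef z)
  finally show ?thesis .
qed

lemma cis_image_period: "cis ` {0..2*pi} = sphere 0 1"
proof
  show "cis ` {0..2*pi} \<subseteq> sphere 0 1" by auto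
  show "sphere 0 1 \<subseteq> cis ` {0..2*pi}"
  proof
    fix z :: complex assume "z \<in> sphere 0 1"
    then have n: "norm z = 1" by simp
    have "is_Arg z (Arg2pi z)" "0 \<le> Arg2pi z" "Arg2pi z < 2*pi" using Arg2pi by auto
    then have "z = cis (Arg2pi z)" using n unfolding is_Arg_def by (simp add: cis_conv_exp)
    then show "z \<in> cis ` {0..2*pi}" using \<open>0 \<le> Arg2pi z\<close> \<open>Arg2pi z < 2*pi\<close> by auto
  qed
qed

lemma cis_eq_cis_period:
  assumes "s \<in> {0..2*pi}" "t \<in> {0..2*pi}" "cis s = cis t"
  shows "s = t \<or> (s = 0 \<and> t = 2*pi) \<or> (s = 2*pi \<and> t = 0)"
proof (cases "\<bar>s - t\<bar> < 2*pi")
  case True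
  have "is_Arg (cis t) s" "is_Arg (cis t) t" using assms(3)
    by (auto simp: is_Arg_def cis_conv_exp)
  from is_Arg_eqI[OF this True] show ?thesis by simp
next
  case False
  then show ?thesis using assms(1,2) by auto
qed

lemma continuous_periodic_factors_through_cis:
  fixes h :: "real \<Rightarrow> complex"
  assumes h: "continuous_on {0..2*pi} h" and per: "h 0 = h (2*pi)"
  obtains F where "continuous_on (sphere 0 1) F" "\<And>t. t \<in> {0..2*pi} \<Longrightarrow> F (cis t) = h t"
proof
  define F where "F z = h (SOME t. t \<in> {0..2*pi} \<and> cis t = z)" for z
  show Fcis: "F (cis t) = h t" if "t \<in> {0..2*pi}" for t
  proof -
    have "\<exists>s. s \<in> {0..2*pi} \<and> cis s = cis t" using that by blast
    then have s: "(SOME s. s \<in> {0..2*pi} \<and> cis s = cis t) \<in> {0..2*pi}"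
      "cis (SOME s. s \<in> {0..2*pi} \<and> cis s = cis t) = cis t"
      by (metis (mono_tags, lifting) someI_ex)+
    from cis_eq_cis_period[OF s(1) that s(2)] per show ?thesis
      unfolding F_def by auto
  qed
  show "continuous_on (sphere 0 1) F"
  proof (rule continuous_from_closed_graph[of "h ` {0..2*pi}"])
    show "compact (h ` {0..2*pi})"
      by (intro compact_continuous_image h) auto
    show "F \<in> sphere 0 1 \<rightarrow> h ` {0..2*pi}"
      using Fcis by (auto simp flip: cis_image_period)
    have "(\<lambda>x. (x, F x)) ` sphere 0 1 = (\<lambda>t. (cis t, h t)) ` {0..2*pi}"
      unfolding cis_image_period[symmetric] image_image using Fcis by (auto simp: image_iff)
    moreover have "compact ((\<lambda>t. (cis t, h t)) ` {0..2*pi})"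
      by (intro compact_continuous_image continuous_on_Pair continuous_intros h) auto
    ultimately show "closed ((\<lambda>x. (x, F x)) ` sphere 0 1)"
      by (simp add: compact_imp_closed)
  qed
qed

text \<open>Approximate \<open>cnj \<circ> h\<close> uniformly by trigonometric polynomials (Stone--Weierstrass on the
  circle); each of them is orthogonal to \<open>h\<close>.\<close>

lemma norm_integral_cnj_mult_le:
  assumes h: "continuous_on {0..2*pi} h" and per: "h 0 = h (2*pi)" and z: "\<And>k. fcoef h k = 0"
    and M: "\<And>t. t \<in> {0..2*pi} \<Longrightarrow> norm (h t) \<le> M" and e: "e > 0"
  shows "norm (integral {0..2*pi} (\<lambda>t. cnj (h t) * h t)) \<le> e * M * (2*pi)"
proof -
  have M0: "M \<ge> 0" using M[of 0] by (auto intro: order_trans[OF norm_ge_zero])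
  obtain F where cF: "continuous_on (sphere 0 1) F" and Fcis: "\<And>t. t \<in> {0..2*pi} \<Longrightarrow> F (cis t) = cnj (h t)"
    using continuous_periodic_factors_through_cis[of "\<lambda>t. cnj (h t)"] h per
    by (metis continuous_on_cnj)
  obtain P where P: "polynomial_function P" "\<And>z. z \<in> sphere 0 1 \<Longrightarrow> norm (F z - P z) < e"
    using Stone_Weierstrass_polynomial_function[OF compact_sphere cF e] by blast
  have cP: "continuous_on {0..2*pi} (\<lambda>t. P (cis t))"
    by (intro continuous_on_compose2[OF continuous_on_polymonial_function[OF P(1)]] continuous_intros) auto
  have "integral {0..2*pi} (\<lambda>t. P (cis t) * h t) = 0"
    by (rule integral_trig_poly_mult_eq_0[OF h z trig_poly_polynomial_cis[OF P(1)]])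
  moreover have "integral {0..2*pi} (\<lambda>t. (cnj (h t) - P (cis t)) * h t)
      = integral {0..2*pi} (\<lambda>t. cnj (h t) * h t) - integral {0..2*pi} (\<lambda>t. P (cis t) * h t)"
    unfolding left_diff_distrib
    by (rule integral_diff) (auto intro!: integrable_continuous_real continuous_intros h cP)
  moreover have "norm (integral {0..2*pi} (\<lambda>t. (cnj (h t) - P (cis t)) * h t)) \<le> (e * M) * (2*pi)"
  proof -
    have "norm ((cnj (h t) - P (cis t)) * h t) \<le> e * M" if t: "t \<in> {0..2*pi}" for t
    proof -
      have "norm (cnj (h t) - P (cis t)) < e" using P(2)[of "cis t"] Fcis[OF t] by simp
      then show ?thesis unfolding norm_mult using e by (intro mult_mono M t) auto
    qed
    moreover have "continuous_on {0..2 * pi} (\<lambda>t. (cnj (h t) - P (cis t)) * h t)"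
      by (intro continuous_intros h cP)
    ultimately show ?thesis
      using has_integral_bound_real[OF _ finite.emptyI integrable_integral[OF integrable_continuous_real],
          of "e*M" 0 "2*pi" "\<lambda>t. (cnj (h t) - P (cis t)) * h t"] e M0
      by auto
  qed
  ultimately show ?thesis by simp
qed

lemma integral_cnj_mult_eq_0:
  assumes h: "continuous_on {0..2*pi} h" and per: "h 0 = h (2*pi)" and z: "\<And>k. fcoef h k = 0"
  shows "integral {0..2*pi} (\<lambda>t. cnj (h t) * h t) = 0"
proof -
  obtain M where M: "M \<ge> 0" "\<And>t. t \<in> {0..2*pi} \<Longrightarrow> norm (h t) \<le> M"
    using continuous_on_period_bounded[OF h] by blast
  define X where "X = (M + 1) * (2*pi)"
  have X: "X > 0" "M * (2*pi) \<le> X"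
    unfolding X_def using M(1) by (auto intro!: mult_pos_pos mult_right_mono)
  have "norm (integral {0..2*pi} (\<lambda>t. cnj (h t) * h t)) \<le> 0 + e" if e: "e > 0" for e
  proof -
    have "norm (integral {0..2*pi} (\<lambda>t. cnj (h t) * h t)) \<le> e / X * M * (2*pi)"
      using e X by (intro norm_integral_cnj_mult_le[OF h per z M(2)]) auto
    also have "\<dots> \<le> e / X * X"
      unfolding mult.assoc using e X by (intro mult_left_mono) auto
    finally show ?thesis using X by simp
  qed
  then have "norm (integral {0..2*pi} (\<lambda>t. cnj (h t) * h t)) \<le> 0" by (rule field_le_epsilon)
  then show ?thesis by simp
qed

lemma fcoef_eq_0_imp_eq_0:
  assumes h: "continuous_on {0..2*pi} h" and per: "h 0 = h (2*pi)" and z: "\<And>k. fcoef h k = 0"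
    and t: "t \<in> {0..2*pi}"
  shows "h t = 0"
proof -
  have ch: "continuous_on {0..2*pi} (\<lambda>t. (norm (h t))\<^sup>2)" by (intro continuous_intros h)
  have "(\<lambda>t. complex_of_real ((norm (h t))\<^sup>2)) = (\<lambda>t. cnj (h t) * h t)"
    by (rule ext, subst complex_norm_square) (simp add: mult.commute)
  moreover have "((\<lambda>t. complex_of_real ((norm (h t))\<^sup>2)) has_integral
      of_real (integral {0..2*pi} (\<lambda>t. (norm (h t))\<^sup>2))) {0..2*pi}"
    by (rule has_integral_of_real[OF integrable_integral[OF integrable_continuous_real[OF ch]]])
  ultimately have "of_real (integral {0..2*pi} (\<lambda>t. (norm (h t))\<^sup>2)) = (0::complex)"
    using integral_cnj_mult_eq_0[OF h per z] by (simp add: integral_unique)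
  then have "((\<lambda>t. (norm (h t))\<^sup>2) has_integral 0) {0..2*pi}"
    using integrable_integral[OF integrable_continuous_real[OF ch]] by simp
  from has_integral_0_cbox_imp_0[of 0 "2*pi" "\<lambda>t. (norm (h t))\<^sup>2" t] this ch t
  show ?thesis using pi_gt_zero by simp
qed

section \<open>Absolutely convergent Fourier series\<close>

definition inv_sq :: "int \<Rightarrow> real" where "inv_sq k = 1 / (1 + real_of_int \<bar>k\<bar>)\<^sup>2"

lemma inv_sq_pos: "inv_sq k > 0" unfolding inv_sq_def by (simp add: add_pos_nonneg)

lemma inv_sq_summable: "inv_sq summable_on UNIV"
proof -
  have s: "summable (\<lambda>n. 1 / (1 + real n)\<^sup>2)"
    using inverse_power_summable[of 2, where 'a=real] summable_Suc_iff[of "\<lambda>n. inverse (real n ^ 2)"]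
    by (simp add: divide_inverse add.commute)
  have sn: "(\<lambda>n::nat. 1 / (1 + real n)\<^sup>2) summable_on UNIV"
    by (rule norm_summable_imp_summable_on) (use s in simp)
  have "(inv_sq \<circ> int) summable_on UNIV" using sn by (simp add: inv_sq_def o_def)
  then have 1: "inv_sq summable_on (range int)" by (subst summable_on_reindex) auto
  have "(inv_sq \<circ> (\<lambda>n. - int n)) summable_on UNIV" using sn by (simp add: inv_sq_def o_def)
  then have 2: "inv_sq summable_on (range (\<lambda>n. - int n))" by (subst summable_on_reindex) (auto simp: inj_on_def)
  have "UNIV = range int \<union> range (\<lambda>n. - int n)"
  proof -
    have "k \<in> range int \<union> range (\<lambda>n. - int n)" for k :: int
    proof (cases "k \<ge> 0")
      case True
      then have "k = int (nat k)" by simp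
      then show ?thesis by blast
    next
      case False
      then have "k = - int (nat (-k))" by simp
      then show ?thesis by blast
    qed
    then show ?thesis by auto
  qed
  then show ?thesis using summable_on_union[OF 1 2] by simp
qed

definition inv_sq_sum :: real where "inv_sq_sum = infsum inv_sq UNIV"

lemma inv_sq_sum_nonneg: "inv_sq_sum \<ge> 0" unfolding inv_sq_sum_def by (intro infsum_nonneg) (simp add: less_imp_le inv_sq_pos)

lemma inv_sq_shift_summable: "(\<lambda>k. inv_sq (a - k)) summable_on UNIV" "(\<lambda>k. inv_sq (k - a)) summable_on UNIV"
proof -
  have b1: "bij_betw (\<lambda>k. a - k) UNIV UNIV" by (rule bij_betwI[of _ _ _ "\<lambda>k. a - k"]) auto
  have b2: "bij_betw (\<lambda>k. k - a) UNIV UNIV" by (rule bij_betwI[of _ _ _ "\<lambda>k. k + a"]) auto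
  show "(\<lambda>k. inv_sq (a - k)) summable_on UNIV" using summable_on_reindex_bij_betw[OF b1] inv_sq_summable by blast
  show "(\<lambda>k. inv_sq (k - a)) summable_on UNIV" using summable_on_reindex_bij_betw[OF b2] inv_sq_summable by blast
qed

lemma inv_sq_shift_infsum: "infsum (\<lambda>k. inv_sq (a - k)) UNIV = inv_sq_sum" "infsum (\<lambda>k. inv_sq (k - a)) UNIV = inv_sq_sum"
proof -
  have b1: "bij_betw (\<lambda>k. a - k) UNIV UNIV" by (rule bij_betwI[of _ _ _ "\<lambda>k. a - k"]) auto
  have b2: "bij_betw (\<lambda>k. k - a) UNIV UNIV" by (rule bij_betwI[of _ _ _ "\<lambda>k. k + a"]) auto
  show "infsum (\<lambda>k. inv_sq (a - k)) UNIV = inv_sq_sum" unfolding inv_sq_sum_def using infsum_reindex_bij_betw[OF b1] by blast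
  show "infsum (\<lambda>k. inv_sq (k - a)) UNIV = inv_sq_sum" unfolding inv_sq_sum_def using infsum_reindex_bij_betw[OF b2] by blast
qed

lemma summable_norm_inv_sq_dominated:
  fixes f :: "int \<Rightarrow> 'a::banach"
  assumes "\<And>k. norm (f k) \<le> B * inv_sq (a - k)"
  shows "(\<lambda>k. norm (f k)) summable_on UNIV"
proof (rule Infinite_Sum.abs_summable_on_comparison_test')
  show "(\<lambda>k. B * inv_sq (a - k)) summable_on UNIV"
    using summable_on_cmult_right[OF inv_sq_shift_summable(1)] by blast
qed (use assms in auto)

lemma norm_infsum_inv_sq_dominated:
  fixes f :: "int \<Rightarrow> 'a::banach"
  assumes "\<And>k. norm (f k) \<le> B * inv_sq (a - k)"
  shows "norm (infsum f UNIV) \<le> B * inv_sq_sum"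
proof -
  have s: "(\<lambda>k. B * inv_sq (a - k)) summable_on UNIV"
    using summable_on_cmult_right[OF inv_sq_shift_summable(1)] by blast
  note as = summable_norm_inv_sq_dominated[OF assms]
  have "norm (infsum f UNIV) \<le> infsum (\<lambda>k. norm (f k)) UNIV"
    by (rule norm_infsum_bound[OF as])
  also have "\<dots> \<le> infsum (\<lambda>k. B * inv_sq (a - k)) UNIV"
    by (rule infsum_mono[OF as s]) (use assms in auto)
  also have "\<dots> = B * inv_sq_sum" by (simp add: infsum_cmult_right'[of B] inv_sq_shift_infsum)
  finally show ?thesis .
qed

lemma norm_infsum_diff_sum_le:
  fixes f :: "int \<Rightarrow> complex"
  assumes as: "(\<lambda>k. norm (f k)) summable_on UNIV" and F: "finite F"
  shows "norm (infsum f UNIV - sum f F) \<le> infsum (\<lambda>k. norm (f k)) (UNIV - F)"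
proof -
  have sf: "f summable_on UNIV" using abs_summable_summable[OF as] .
  have s1: "f summable_on (UNIV - F)" by (rule summable_on_subset_banach[OF sf]) auto
  have "infsum f UNIV = infsum f (F \<union> (UNIV - F))" by simp
  also have "\<dots> = infsum f F + infsum f (UNIV - F)"
    by (rule infsum_Un_disjoint) (use F s1 in auto)
  finally have "infsum f UNIV - sum f F = infsum f (UNIV - F)" using F by simp
  moreover have "(\<lambda>k. norm (f k)) summable_on (UNIV - F)"
    by (rule summable_on_subset_banach[OF as]) auto
  ultimately show ?thesis using norm_infsum_bound by metis
qed

lemma infsum_tail_small:
  fixes g :: "int \<Rightarrow> real"
  assumes s: "g summable_on UNIV" and nn: "\<And>k. g k \<ge> 0" and e: "e > 0"
  shows "\<exists>F0. finite F0 \<and> (\<forall>F. finite F \<longrightarrow> F0 \<subseteq> F \<longrightarrow> infsum g (UNIV - F) < e)"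
proof -
  obtain F0 where F0: "finite F0" "dist (sum g F0) (infsum g UNIV) \<le> e/2"
    using infsum_finite_approximation[OF s, of "e/2"] e by auto
  have "infsum g (UNIV - F) < e" if "finite F" "F0 \<subseteq> F" for F
  proof -
    have s1: "g summable_on (UNIV - F)" by (rule summable_on_subset_banach[OF s]) auto
    have "infsum g UNIV = infsum g (F \<union> (UNIV - F))" by simp
    also have "\<dots> = infsum g F + infsum g (UNIV - F)"
      by (rule infsum_Un_disjoint) (use that s1 in auto)
    finally have eq: "infsum g (UNIV - F) = infsum g UNIV - sum g F" using that by simp
    have "sum g F0 \<le> sum g F" by (rule sum_mono2) (use that nn in auto)
    moreover have "sum g F \<le> infsum g UNIV"
      by (rule finite_sum_le_infsum[OF s]) (use that nn in auto)
    ultimately show ?thesis using eq F0(2) e by (auto simp: dist_real_def)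
  qed
  then show ?thesis using F0(1) by blast
qed

lemma fcoef_trig_sum:
  assumes "finite F" "k \<in> F"
  shows "fcoef (\<lambda>t. \<Sum>j\<in>F. a j * expi j t) k = a k"
proof -
  have "fcoef (\<lambda>t. \<Sum>j\<in>F. a j * expi j t) k = (\<Sum>j\<in>F. fcoef (\<lambda>t. a j * expi j t) k)"
    by (rule fcoef_sum[OF assms(1)]) (intro continuous_intros)
  also have "\<dots> = (\<Sum>j\<in>F. a j * (if j = k then 1 else 0))"
    by (simp add: fcoef_cmult fcoef_expi)
  also have "\<dots> = a k" using assms by (simp add: if_distrib sum.delta' cong: if_cong)
  finally show ?thesis .
qed

lemma norm_fourier_series_diff_sum_le:
  assumes as: "(\<lambda>k. norm (a k)) summable_on UNIV" and F: "finite F"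
  shows "norm (infsum (\<lambda>k. a k * expi k t) UNIV - (\<Sum>k\<in>F. a k * expi k t))
    \<le> infsum (\<lambda>k. norm (a k)) (UNIV - F)"
  using norm_infsum_diff_sum_le[of "\<lambda>k. a k * expi k t", OF _ F] as by (simp add: norm_mult)

lemma continuous_on_fourier_series:
  assumes as: "(\<lambda>k. norm (a k)) summable_on UNIV"
  shows "continuous_on S (\<lambda>t. infsum (\<lambda>k. a k * expi k t) UNIV)"
proof (rule uniform_limit_theorem[where F="finite_subsets_at_top UNIV"])
  show "\<forall>\<^sub>F F in finite_subsets_at_top UNIV. continuous_on S (\<lambda>t. \<Sum>k\<in>F. a k * expi k t)"
    by (simp add: continuous_intros)
  show "uniform_limit S (\<lambda>F t. \<Sum>k\<in>F. a k * expi k t) (\<lambda>t. infsum (\<lambda>k. a k * expi k t) UNIV)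
      (finite_subsets_at_top UNIV)"
    unfolding uniform_limit_iff
  proof (intro allI impI)
    fix e :: real assume "e > 0"
    then obtain F0 where F0: "finite F0" "\<And>F. finite F \<Longrightarrow> F0 \<subseteq> F \<Longrightarrow> infsum (\<lambda>k. norm (a k)) (UNIV - F) < e"
      using infsum_tail_small[OF as] by force
    show "\<forall>\<^sub>F F in finite_subsets_at_top UNIV. \<forall>t\<in>S.
        dist (\<Sum>k\<in>F. a k * expi k t) (infsum (\<lambda>k. a k * expi k t) UNIV) < e"
      unfolding eventually_finite_subsets_at_top
    proof (intro exI[of _ F0] conjI allI impI ballI)
      fix F t assume F: "finite F \<and> F0 \<subseteq> F \<and> F \<subseteq> UNIV"
      have "dist (\<Sum>k\<in>F. a k * expi k t) (infsum (\<lambda>k. a k * expi k t) UNIV)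
          \<le> infsum (\<lambda>k. norm (a k)) (UNIV - F)"
        unfolding dist_norm norm_minus_commute[of "\<Sum>k\<in>F. a k * expi k t"]
        using F by (intro norm_fourier_series_diff_sum_le[OF as]) auto
      also have "\<dots> < e" using F F0(2) by blast
      finally show "dist (\<Sum>k\<in>F. a k * expi k t) (infsum (\<lambda>k. a k * expi k t) UNIV) < e" .
    qed (use F0 in auto)
  qed
qed (simp add: finite_subsets_at_top_neq_bot)

lemma fcoef_fourier_series:
  assumes as: "(\<lambda>k. norm (a k)) summable_on UNIV"
  shows "fcoef (\<lambda>t. infsum (\<lambda>k. a k * expi k t) UNIV) k = a k"
proof -
  define g where "g t = infsum (\<lambda>k. a k * expi k t) UNIV" for t
  have cg: "continuous_on {0..2*pi} g"
    unfolding g_def by (rule continuous_on_fourier_series[OF as])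
  have "norm (fcoef g k - a k) \<le> 0 + e" if "e > 0" for e
  proof -
    obtain F0 where F0: "finite F0" "\<And>F. finite F \<Longrightarrow> F0 \<subseteq> F \<Longrightarrow> infsum (\<lambda>k. norm (a k)) (UNIV - F) < e"
      using infsum_tail_small[OF as _ \<open>e > 0\<close>] by force
    define F where "F = insert k F0"
    have F: "finite F" "k \<in> F" "F0 \<subseteq> F" using F0 by (auto simp: F_def)
    have "fcoef g k - a k = fcoef (\<lambda>t. g t - (\<Sum>j\<in>F. a j * expi j t)) k"
      using fcoef_diff[OF cg, of "\<lambda>t. \<Sum>j\<in>F. a j * expi j t"] fcoef_trig_sum[OF F(1,2)]
      by (simp add: continuous_intros)
    also have "norm \<dots> \<le> infsum (\<lambda>k. norm (a k)) (UNIV - F)"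
    proof (rule norm_fcoef_le)
      show "continuous_on {0..2*pi} (\<lambda>t. g t - (\<Sum>j\<in>F. a j * expi j t))"
        by (intro continuous_intros cg)
      show "norm (g t - (\<Sum>j\<in>F. a j * expi j t)) \<le> infsum (\<lambda>k. norm (a k)) (UNIV - F)" for t
        unfolding g_def by (rule norm_fourier_series_diff_sum_le[OF as F(1)])
    qed
    also have "\<dots> < e" using F0(2)[OF F(1,3)] .
    finally show ?thesis by simp
  qed
  then have "norm (fcoef g k - a k) \<le> 0" by (rule field_le_epsilon)
  then show ?thesis unfolding g_def by simp
qed

lemma fourier_inversion:
  assumes f: "continuous_on {0..2*pi} f" and per: "f 0 = f (2*pi)"
    and as: "(\<lambda>k. norm (fcoef f k)) summable_on UNIV" and t: "t \<in> {0..2*pi}"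
  shows "f t = infsum (\<lambda>k. fcoef f k * expi k t) UNIV"
proof -
  define g where "g t = infsum (\<lambda>k. fcoef f k * expi k t) UNIV" for t
  have cg: "continuous_on {0..2*pi} g"
    unfolding g_def by (rule continuous_on_fourier_series[OF as])
  have "f t - g t = 0"
  proof (rule fcoef_eq_0_imp_eq_0[where h="\<lambda>t. f t - g t", OF _ _ _ t])
    show "continuous_on {0..2 * pi} (\<lambda>t. f t - g t)" by (intro continuous_intros f cg)
    show "f 0 - g 0 = f (2 * pi) - g (2 * pi)" using per by (simp add: g_def)
    show "fcoef (\<lambda>t. f t - g t) k = 0" for k
    proof -
      have "fcoef g k = fcoef f k" unfolding g_def by (rule fcoef_fourier_series[OF as])
      then show ?thesis using fcoef_diff[OF f cg] by simp
    qed
  qed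
  then show ?thesis by (simp add: g_def)
qed

lemma norm_fourier_remainder_le:
  assumes f: "continuous_on {0..2*pi} f" "f 0 = f (2*pi)"
    and as: "(\<lambda>k. norm (fcoef f k)) summable_on UNIV" and t: "t \<in> {0..2*pi}" and F: "finite F"
  shows "norm (f t - (\<Sum>k\<in>F. fcoef f k * expi k t)) \<le> infsum (\<lambda>k. norm (fcoef f k)) (UNIV - F)"
  using norm_fourier_series_diff_sum_le[OF as F] fourier_inversion[OF f as t] by simp

lemma fcoef_trig_sum_mult:
  assumes F: "finite F" and w: "continuous_on {0..2*pi} w"
  shows "fcoef (\<lambda>t. (\<Sum>k\<in>F. a k * expi k t) * w t) \<sigma> = (\<Sum>k\<in>F. a k * fcoef w (\<sigma> - k))"
proof -
  have "fcoef (\<lambda>t. (\<Sum>k\<in>F. a k * expi k t) * w t) \<sigma> = fcoef (\<lambda>t. \<Sum>k\<in>F. a k * (expi k t * w t)) \<sigma>"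
    by (simp add: sum_distrib_right mult.assoc)
  also have "\<dots> = (\<Sum>k\<in>F. fcoef (\<lambda>t. a k * (expi k t * w t)) \<sigma>)"
    by (rule fcoef_sum[OF F]) (intro continuous_intros w)
  also have "\<dots> = (\<Sum>k\<in>F. a k * fcoef w (\<sigma> - k))"
    by (simp add: fcoef_cmult fcoef_expi_mult)
  finally show ?thesis .
qed

lemma norm_fcoef_mult_diff_partial_convolution_le:
  assumes c: "continuous_on {0..2*pi} c" "c 0 = c (2*pi)"
    and as: "(\<lambda>k. norm (fcoef c k)) summable_on UNIV" and w: "continuous_on {0..2*pi} w"
    and W: "W \<ge> 0" "\<And>t. t \<in> {0..2*pi} \<Longrightarrow> norm (w t) \<le> W" and F: "finite F"
  shows "norm (fcoef (\<lambda>t. c t * w t) \<sigma> - (\<Sum>k\<in>F. fcoef c k * fcoef w (\<sigma> - k)))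
    \<le> infsum (\<lambda>k. norm (fcoef c k)) (UNIV - F) * W"
proof -
  define S where "S t = (\<Sum>k\<in>F. fcoef c k * expi k t)" for t
  have cS: "continuous_on {0..2*pi} S" unfolding S_def by (intro continuous_intros)
  have "fcoef (\<lambda>t. c t * w t) \<sigma> - (\<Sum>k\<in>F. fcoef c k * fcoef w (\<sigma> - k))
      = fcoef (\<lambda>t. c t * w t - S t * w t) \<sigma>"
    unfolding S_def fcoef_trig_sum_mult[OF F w, symmetric]
    by (rule fcoef_diff[symmetric]) (intro continuous_intros c w)+
  also have "norm \<dots> \<le> infsum (\<lambda>k. norm (fcoef c k)) (UNIV - F) * W"
  proof (rule norm_fcoef_le)
    show "continuous_on {0..2 * pi} (\<lambda>t. c t * w t - S t * w t)" by (intro continuous_intros c w cS)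
    fix t assume t: "t \<in> {0..2*pi}"
    have "norm (c t - S t) \<le> infsum (\<lambda>k. norm (fcoef c k)) (UNIV - F)"
      unfolding S_def by (rule norm_fourier_remainder_le[OF c as t F])
    then show "norm (c t * w t - S t * w t) \<le> infsum (\<lambda>k. norm (fcoef c k)) (UNIV - F) * W"
      unfolding left_diff_distrib[symmetric] norm_mult
      by (intro mult_mono W(2) t) (auto intro!: infsum_nonneg)
  qed
  finally show ?thesis .
qed

lemma infsum_convolution_commute:
  fixes a b :: "int \<Rightarrow> 'a::{comm_monoid_add, t2_space, times}"
  shows "infsum (\<lambda>k. a k * b (\<sigma> - k)) UNIV = infsum (\<lambda>\<rho>. a (\<sigma> - \<rho>) * b \<rho>) UNIV"
proof -
  have "bij_betw (\<lambda>k. \<sigma> - k) UNIV UNIV" by (rule bij_betwI[of _ _ _ "\<lambda>k. \<sigma> - k"]) auto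
  from infsum_reindex_bij_betw[OF this, of "\<lambda>\<rho>. a (\<sigma> - \<rho>) * b \<rho>"] show ?thesis by simp
qed

lemma fcoef_mult_convolution:
  assumes c: "continuous_on {0..2*pi} c" "c 0 = c (2*pi)"
    and as: "(\<lambda>k. norm (fcoef c k)) summable_on UNIV" and w: "continuous_on {0..2*pi} w"
  shows "fcoef (\<lambda>t. c t * w t) \<sigma> = infsum (\<lambda>\<rho>. fcoef c (\<sigma> - \<rho>) * fcoef w \<rho>) UNIV"
proof -
  obtain W where W: "W \<ge> 0" "\<And>t. t \<in> {0..2*pi} \<Longrightarrow> norm (w t) \<le> W"
    using continuous_on_period_bounded[OF w] by blast
  have wb: "norm (fcoef c k * fcoef w j) \<le> W * norm (fcoef c k)" for k j
    using mult_left_mono[OF norm_fcoef_le[OF w W(2)] norm_ge_zero[of "fcoef c k"]]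
    by (simp add: norm_mult mult.commute)
  define A where "A = infsum (\<lambda>k. fcoef c k * fcoef w (\<sigma> - k)) UNIV"
  define T where "T F = infsum (\<lambda>k. norm (fcoef c k)) (UNIV - F)" for F
  have asW: "(\<lambda>k. W * norm (fcoef c k)) summable_on UNIV"
    using summable_on_cmult_right[OF as] by blast
  have asA: "(\<lambda>k. norm (fcoef c k * fcoef w (\<sigma> - k))) summable_on UNIV"
    by (rule Infinite_Sum.abs_summable_on_comparison_test'[OF asW]) (auto simp: wb)
  have "norm (fcoef (\<lambda>t. c t * w t) \<sigma> - A) \<le> 0 + e" if e: "e > 0" for e
  proof -
    obtain F where F: "finite F" "T F < e / (2 * W + 1)"
      using infsum_tail_small[OF as _ divide_pos_pos[OF e], of "2 * W + 1"] W(1) unfolding T_def by force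
    have "norm (A - (\<Sum>k\<in>F. fcoef c k * fcoef w (\<sigma> - k))) \<le>
        infsum (\<lambda>k. norm (fcoef c k * fcoef w (\<sigma> - k))) (UNIV - F)"
      unfolding A_def by (rule norm_infsum_diff_sum_le[OF asA F(1)])
    also have "\<dots> \<le> infsum (\<lambda>k. W * norm (fcoef c k)) (UNIV - F)"
      by (rule infsum_mono[OF summable_on_subset_banach[OF asA] summable_on_subset_banach[OF asW]])
         (auto simp: wb)
    also have "\<dots> = T F * W" unfolding T_def by (simp add: infsum_cmult_right' mult.commute)
    finally have "norm (A - (\<Sum>k\<in>F. fcoef c k * fcoef w (\<sigma> - k))) \<le> T F * W" .
    then have "norm (fcoef (\<lambda>t. c t * w t) \<sigma> - A) \<le> T F * W + T F * W"
      using norm_fcoef_mult_diff_partial_convolution_le[OF c as w W F(1), of \<sigma>]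
      unfolding T_def by (intro norm_diff_triangle_le) (auto simp: norm_minus_commute)
    also have "\<dots> \<le> T F * (2 * W + 1)"
      using W(1) by (simp add: algebra_simps T_def infsum_nonneg)
    also have "\<dots> < e"
      using F(2) W(1) by (simp add: field_simps)
    finally show ?thesis by simp
  qed
  then have "fcoef (\<lambda>t. c t * w t) \<sigma> = A"
    using field_le_epsilon[of "norm (fcoef (\<lambda>t. c t * w t) \<sigma> - A)" 0] by simp
  then show ?thesis unfolding A_def by (simp add: infsum_convolution_commute)
qed

section \<open>Smooth periodic functions\<close>

lemma has_vector_derivative_shift:
  assumes "(g has_vector_derivative g') (at (x + a))"
  shows "((\<lambda>s. g (s + a)) has_vector_derivative g') (at x)"
proof -
  have "((\<lambda>s. s + a) has_vector_derivative 1) (at x)"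
    by (auto intro!: derivative_eq_intros)
  from vector_diff_chain_at[OF this] assms show ?thesis by (simp add: o_def)
qed

context
  fixes c :: "real \<Rightarrow> complex"
  assumes sc: "smooth_periodic c"
begin

lemma vderiv_iter_has_vector_derivative: "((vderiv ^^ k) c has_vector_derivative (vderiv ^^ Suc k) c t) (at t)"
proof -
  have "(vderiv ^^ k) c differentiable (at t)" using sc unfolding smooth_periodic_def by blast
  then show ?thesis by (simp add: vector_derivative_works vderiv_def)
qed

lemma continuous_on_vderiv_iter: "continuous_on S ((vderiv ^^ k) c)"
  by (meson continuous_at_imp_continuous_on vderiv_iter_has_vector_derivative has_vector_derivative_continuous)

lemma vderiv_iter_periodic: "(vderiv ^^ k) c (t + 2*pi) = (vderiv ^^ k) c t"
proof (induction k arbitrary: t)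
  case 0
  then show ?case using sc by (simp add: smooth_periodic_def)
next
  case (Suc k)
  have eq: "(\<lambda>s. (vderiv ^^ k) c (s + 2*pi)) = (vderiv ^^ k) c" using Suc by auto
  have "((\<lambda>s. (vderiv ^^ k) c (s + 2*pi)) has_vector_derivative (vderiv ^^ Suc k) c (t + 2*pi)) (at t)"
    by (rule has_vector_derivative_shift[OF vderiv_iter_has_vector_derivative])
  then have "((vderiv ^^ k) c has_vector_derivative (vderiv ^^ Suc k) c (t + 2*pi)) (at t)" by (simp only: eq)
  from vector_derivative_unique_at[OF this vderiv_iter_has_vector_derivative] show ?case .
qed

lemma vderiv_iter_0_2pi: "(vderiv ^^ k) c 0 = (vderiv ^^ k) c (2*pi)" using vderiv_iter_periodic[of k 0] by simp

lemma fcoef_vderiv_iter: "fcoef ((vderiv ^^ k) c) \<sigma> = (\<i> * of_int \<sigma>) ^ k * fcoef c \<sigma>"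
proof (induction k)
  case 0
  then show ?case by simp
next
  case (Suc k)
  have "fcoef ((vderiv ^^ Suc k) c) \<sigma> = \<i> * of_int \<sigma> * fcoef ((vderiv ^^ k) c) \<sigma>"
    by (rule fcoef_derivative[OF has_vector_derivative_at_within[OF vderiv_iter_has_vector_derivative] continuous_on_vderiv_iter vderiv_iter_0_2pi])
  then show ?case using Suc by simp
qed

lemma smooth_periodic_continuous_on: "continuous_on S c" using continuous_on_vderiv_iter[of S 0] by simp
lemma smooth_periodic_0_2pi: "c 0 = c (2*pi)" using vderiv_iter_0_2pi[of 0] by simp

lemma smooth_periodic_fcoef_decay: "\<exists>B\<ge>0. \<forall>\<sigma>. norm (fcoef c \<sigma>) * (1 + real_of_int \<bar>\<sigma>\<bar>) ^ N \<le> B"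
proof -
  obtain M0 where M0: "M0 \<ge> 0" "\<And>t. t \<in> {0..2*pi} \<Longrightarrow> norm ((vderiv ^^ 0) c t) \<le> M0"
    using continuous_on_period_bounded[OF continuous_on_vderiv_iter] by blast
  obtain MN where MN: "MN \<ge> 0" "\<And>t. t \<in> {0..2*pi} \<Longrightarrow> norm ((vderiv ^^ N) c t) \<le> MN"
    using continuous_on_period_bounded[OF continuous_on_vderiv_iter] by blast
  have b0: "norm (fcoef c \<sigma>) \<le> M0" for \<sigma>
    using norm_fcoef_le[OF continuous_on_vderiv_iter M0(2), of \<sigma>] by simp
  have bN: "\<bar>real_of_int \<sigma>\<bar> ^ N * norm (fcoef c \<sigma>) \<le> MN" for \<sigma>
    using norm_fcoef_le[OF continuous_on_vderiv_iter MN(2), of \<sigma>] by (simp add: fcoef_vderiv_iter norm_mult norm_power)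
  have "norm (fcoef c \<sigma>) * (1 + real_of_int \<bar>\<sigma>\<bar>) ^ N \<le> 2 ^ N * MN + M0" for \<sigma>
  proof (cases "\<sigma> = 0")
    case True
    then show ?thesis using b0[of \<sigma>] MN by (simp add: add_increasing)
  next
    case False
    then have ge1: "real_of_int \<bar>\<sigma>\<bar> \<ge> 1" by linarith
    have "(1 + real_of_int \<bar>\<sigma>\<bar>) ^ N \<le> (2 * \<bar>real_of_int \<sigma>\<bar>) ^ N"
      by (rule power_mono) (use ge1 in auto)
    then have "norm (fcoef c \<sigma>) * (1 + real_of_int \<bar>\<sigma>\<bar>) ^ N \<le> norm (fcoef c \<sigma>) * (2 * \<bar>real_of_int \<sigma>\<bar>) ^ N"
      by (rule mult_left_mono) simp
    also have "\<dots> = 2 ^ N * (\<bar>real_of_int \<sigma>\<bar> ^ N * norm (fcoef c \<sigma>))"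
      by (simp add: power_mult_distrib)
    also have "\<dots> \<le> 2 ^ N * MN" by (rule mult_left_mono[OF bN]) simp
    finally show ?thesis using M0 by simp
  qed
  moreover have "2 ^ N * MN + M0 \<ge> 0" using MN M0 by simp
  ultimately show ?thesis by blast
qed

lemma smooth_periodic_fcoef_decay_divide: "\<exists>B\<ge>0. \<forall>\<sigma>. norm (fcoef c \<sigma>) \<le> B / (1 + real_of_int \<bar>\<sigma>\<bar>) ^ N"
proof -
  obtain B where B: "B \<ge> 0" "\<And>\<sigma>. norm (fcoef c \<sigma>) * (1 + real_of_int \<bar>\<sigma>\<bar>) ^ N \<le> B"
    using smooth_periodic_fcoef_decay by blast
  have "norm (fcoef c \<sigma>) \<le> B / (1 + real_of_int \<bar>\<sigma>\<bar>) ^ N" for \<sigma>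
    using B(2)[of \<sigma>] by (simp add: field_simps add_pos_nonneg)
  then show ?thesis using B(1) by blast
qed

lemma smooth_periodic_fcoef_summable: "(\<lambda>k. norm (fcoef c k)) summable_on UNIV"
proof -
  obtain B where B: "B \<ge> 0" "\<And>\<sigma>. norm (fcoef c \<sigma>) \<le> B / (1 + real_of_int \<bar>\<sigma>\<bar>) ^ 2"
    using smooth_periodic_fcoef_decay_divide[of 2] by blast
  have "(\<lambda>k. B * inv_sq (0 - k)) summable_on UNIV"
    using summable_on_cmult_right[OF inv_sq_shift_summable(1)] by blast
  then show ?thesis
    by (rule Infinite_Sum.abs_summable_on_comparison_test') (use B in \<open>auto simp: inv_sq_def\<close>)
qed

lemma smooth_periodic_fcoef_mult:
  assumes "continuous_on {0..2*pi} w"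
  shows "fcoef (\<lambda>t. c t * w t) \<sigma> = infsum (\<lambda>\<rho>. fcoef c (\<sigma> - \<rho>) * fcoef w \<rho>) UNIV"
  by (rule fcoef_mult_convolution[OF smooth_periodic_continuous_on smooth_periodic_0_2pi smooth_periodic_fcoef_summable assms])

end

section \<open>Polynomial weights and operators of finite order\<close>

lemma inorm_nonneg: "inorm \<xi> \<ge> 0" unfolding inorm_def by (simp add: sum_nonneg)
lemma fnorm_nonneg: "fnorm \<eta> \<ge> 0" unfolding fnorm_def by simp

lemma inorm_ge_1: assumes "\<xi> \<noteq> 0" shows "inorm \<xi> \<ge> 1"
proof -
  obtain i where i: "\<xi> $ i \<noteq> 0" using assms by (auto simp: vec_eq_iff)
  then have "(1::int) \<le> \<bar>\<xi> $ i\<bar>" by linarith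
  then have a: "1 \<le> \<bar>real_of_int (\<xi> $ i)\<bar>" by (metis of_int_1_le_iff of_int_abs)
  then have "1 * 1 \<le> \<bar>real_of_int (\<xi> $ i)\<bar> * \<bar>real_of_int (\<xi> $ i)\<bar>" by (intro mult_mono) auto
  then have "1 \<le> (real_of_int (\<xi> $ i))\<^sup>2" by (simp add: power2_eq_square)
  also have "\<dots> \<le> (\<Sum>i\<in>UNIV. (real_of_int (\<xi> $ i))\<^sup>2)"
    by (rule member_le_sum) auto
  finally show ?thesis unfolding inorm_def by simp
qed

lemma abs_component_le_inorm: "real_of_int \<bar>\<xi> $ i\<bar> \<le> inorm \<xi>"
proof -
  have "(real_of_int (\<xi> $ i))\<^sup>2 \<le> (\<Sum>j\<in>UNIV. (real_of_int (\<xi> $ j))\<^sup>2)"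
    by (rule member_le_sum) auto
  then show ?thesis unfolding inorm_def by (simp add: real_le_rsqrt)
qed

lemma finite_inorm_le: "finite {\<xi> :: int ^ ('n::finite). inorm \<xi> \<le> R}"
proof -
  define F where "F = {-\<lceil>R\<rceil>..\<lceil>R\<rceil>}"
  have "{\<xi> :: int ^ 'n. inorm \<xi> \<le> R} \<subseteq> vec_lambda ` (PiE UNIV (\<lambda>_. F))"
  proof
    fix \<xi> :: "int ^ 'n" assume "\<xi> \<in> {\<xi>. inorm \<xi> \<le> R}"
    then have "real_of_int \<bar>\<xi> $ i\<bar> \<le> R" for i using abs_component_le_inorm[of \<xi> i] by simp
    have "\<xi> $ i \<in> F" for i
    proof -
      have a: "real_of_int (\<xi> $ i) \<le> R" "- real_of_int (\<xi> $ i) \<le> R"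
        using \<open>\<And>i. real_of_int \<bar>\<xi> $ i\<bar> \<le> R\<close>[of i] by auto
      have "\<xi> $ i \<le> \<lceil>R\<rceil>" using a(1) by (simp add: le_ceiling_iff)
      moreover have "- (\<xi> $ i) \<le> \<lceil>R\<rceil>" using a(2) by (simp add: le_ceiling_iff)
      ultimately show ?thesis unfolding F_def by simp
    qed
    then have "(\<lambda>i. \<xi> $ i) \<in> PiE UNIV (\<lambda>_. F)" by auto
    moreover have "\<xi> = vec_lambda (\<lambda>i. \<xi> $ i)" by simp
    ultimately show "\<xi> \<in> vec_lambda ` (PiE UNIV (\<lambda>_. F))" by blast
  qed
  moreover have "finite (vec_lambda ` (PiE UNIV (\<lambda>_. F)))"
    by (intro finite_imageI finite_PiE) (auto simp: F_def)
  ultimately show ?thesis by (rule finite_subset)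
qed

lemma abs_le_fnorm: "real_of_int \<bar>\<tau>\<bar> \<le> fnorm (\<tau>, \<xi>)"
  unfolding fnorm_def by (simp add: real_le_rsqrt)

lemma inorm_le_fnorm: "inorm \<xi> \<le> fnorm (\<tau>, \<xi>)"
  unfolding fnorm_def using inorm_nonneg[of \<xi>] by (simp add: real_le_rsqrt)

lemma fnorm_eq_norm_Pair: "fnorm (\<tau>, \<xi>) = norm (real_of_int \<tau>, inorm \<xi>)"
  by (simp add: fnorm_def norm_Pair)

lemma fnorm_le_sum: "fnorm (\<tau>, \<xi>) \<le> real_of_int \<bar>\<tau>\<bar> + inorm \<xi>"
  using norm_triangle_ineq[of "(real_of_int \<tau>, 0)" "(0, inorm \<xi>)"] inorm_nonneg[of \<xi>]
  by (simp add: fnorm_eq_norm_Pair norm_Pair)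

lemma fnorm_shift: "fnorm (\<tau>, \<xi>) \<le> real_of_int \<bar>\<tau> - \<sigma>\<bar> + fnorm (\<sigma>, \<xi>)"
  using norm_triangle_ineq[of "(real_of_int (\<tau> - \<sigma>), 0)" "(real_of_int \<sigma>, inorm \<xi>)"]
  by (simp add: fnorm_eq_norm_Pair norm_Pair)

lemma peetre_fnorm: "1 + fnorm (\<tau>, \<xi>) \<le> (1 + real_of_int \<bar>\<tau> - \<sigma>\<bar>) * (1 + fnorm (\<sigma>, \<xi>))"
proof -
  define a where "a = real_of_int \<bar>\<tau> - \<sigma>\<bar>"
  define b where "b = fnorm (\<sigma>, \<xi>)"
  have ab: "a \<ge> 0" "b \<ge> 0" using fnorm_nonneg[of "(\<sigma>, \<xi>)"] by (auto simp: a_def b_def)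
  have "fnorm (\<tau>, \<xi>) \<le> a + b" using fnorm_shift[of \<tau> \<xi> \<sigma>] by (simp add: a_def b_def)
  moreover have "(1 + a) * (1 + b) = 1 + a + b + a * b" by (simp add: algebra_simps)
  moreover have "a * b \<ge> 0" using ab by simp
  ultimately show ?thesis unfolding a_def[symmetric] b_def[symmetric] by linarith
qed

lemma peetre_fnorm_powr:
  "(1 + fnorm (\<sigma>, \<xi>)) powr r \<le> (1 + real_of_int \<bar>\<tau> - \<sigma>\<bar>) powr \<bar>r\<bar> * (1 + fnorm (\<tau>, \<xi>)) powr r"
proof (cases "r \<ge> 0")
  case True
  have "1 + fnorm (\<sigma>, \<xi>) \<le> (1 + real_of_int \<bar>\<tau> - \<sigma>\<bar>) * (1 + fnorm (\<tau>, \<xi>))"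
    using peetre_fnorm[of \<sigma> \<xi> \<tau>] by (simp add: abs_minus_commute)
  then have "(1 + fnorm (\<sigma>, \<xi>)) powr r \<le> ((1 + real_of_int \<bar>\<tau> - \<sigma>\<bar>) * (1 + fnorm (\<tau>, \<xi>))) powr r"
    using True by (intro powr_mono2) (auto simp: add_nonneg_nonneg fnorm_nonneg)
  also have "\<dots> = (1 + real_of_int \<bar>\<tau> - \<sigma>\<bar>) powr \<bar>r\<bar> * (1 + fnorm (\<tau>, \<xi>)) powr r"
    using True by (simp add: powr_mult add_nonneg_nonneg fnorm_nonneg)
  finally show ?thesis .
next
  case False
  define s where "s = - r"
  have s: "s > 0" "r = - s" "\<bar>r\<bar> = s" using False by (auto simp: s_def)
  have pos1: "1 + fnorm (\<sigma>, \<xi>) > 0" "1 + fnorm (\<tau>, \<xi>) > 0" "1 + real_of_int \<bar>\<tau> - \<sigma>\<bar> > 0"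
    using fnorm_nonneg[of "(\<sigma>, \<xi>)"] fnorm_nonneg[of "(\<tau>, \<xi>)"] by (auto simp: add_pos_nonneg)
  have "(1 + fnorm (\<tau>, \<xi>)) powr s \<le> ((1 + real_of_int \<bar>\<tau> - \<sigma>\<bar>) * (1 + fnorm (\<sigma>, \<xi>))) powr s"
    using s pos1 by (intro powr_mono2 peetre_fnorm) auto
  also have "\<dots> = (1 + real_of_int \<bar>\<tau> - \<sigma>\<bar>) powr s * (1 + fnorm (\<sigma>, \<xi>)) powr s"
    using pos1 by (simp add: powr_mult)
  finally have *: "(1 + fnorm (\<tau>, \<xi>)) powr s \<le> (1 + real_of_int \<bar>\<tau> - \<sigma>\<bar>) powr s * (1 + fnorm (\<sigma>, \<xi>)) powr s" .
  show ?thesis unfolding s(2,3) using * pos1 s(1)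
    by (simp add: powr_minus field_simps)
qed

definition order_le :: "('n::finite) coef \<Rightarrow> real \<Rightarrow> bool" where
  "order_le u r \<longleftrightarrow> (\<exists>A. \<forall>\<eta>. norm (u \<eta>) \<le> A * (1 + fnorm \<eta>) powr r)"

lemma order_leE:
  assumes "order_le u r"
  obtains A where "A \<ge> 0" "\<And>\<eta>. norm (u \<eta>) \<le> A * (1 + fnorm \<eta>) powr r"
proof -
  obtain A where A: "\<And>\<eta>. norm (u \<eta>) \<le> A * (1 + fnorm \<eta>) powr r" using assms order_le_def by blast
  have "norm (u \<eta>) \<le> max A 0 * (1 + fnorm \<eta>) powr r" for \<eta>
    using A[of \<eta>] by (smt (verit) mult_right_mono powr_ge_zero)
  then show ?thesis using that[of "max A 0"] by auto
qed

lemma order_le_mono: assumes "order_le u r" "r \<le> s" shows "order_le u s"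
proof -
  obtain A where A: "A \<ge> 0" "\<And>\<eta>. norm (u \<eta>) \<le> A * (1 + fnorm \<eta>) powr r" using order_leE[OF assms(1)] by blast
  have "norm (u \<eta>) \<le> A * (1 + fnorm \<eta>) powr s" for \<eta>
  proof -
    have "(1 + fnorm \<eta>) powr r \<le> (1 + fnorm \<eta>) powr s"
      using assms(2) fnorm_nonneg[of \<eta>] by (intro powr_mono) auto
    then show ?thesis using A(2)[of \<eta>] A(1) by (meson mult_left_mono order_trans)
  qed
  then show ?thesis unfolding order_le_def by blast
qed

lemma order_le_add: assumes "order_le u r" "order_le v r" shows "order_le (\<lambda>\<eta>. u \<eta> + v \<eta>) r"
proof -
  obtain A where A: "\<And>\<eta>. norm (u \<eta>) \<le> A * (1 + fnorm \<eta>) powr r" using order_leE[OF assms(1)] by blast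
  obtain B where B: "\<And>\<eta>. norm (v \<eta>) \<le> B * (1 + fnorm \<eta>) powr r" using order_leE[OF assms(2)] by blast
  have "norm (u \<eta> + v \<eta>) \<le> (A + B) * (1 + fnorm \<eta>) powr r" for \<eta>
    using norm_triangle_ineq[of "u \<eta>" "v \<eta>"] A[of \<eta>] B[of \<eta>] by (simp add: distrib_right)
  then show ?thesis unfolding order_le_def by blast
qed

lemma order_le_cmult: assumes "order_le u r" shows "order_le (\<lambda>\<eta>. a * u \<eta>) r"
proof -
  obtain A where A: "\<And>\<eta>. norm (u \<eta>) \<le> A * (1 + fnorm \<eta>) powr r" using order_leE[OF assms(1)] by blast
  have "norm (a * u \<eta>) \<le> (norm a * A) * (1 + fnorm \<eta>) powr r" for \<eta>
    using mult_left_mono[OF A[of \<eta>], of "norm a"] by (simp add: norm_mult mult.assoc)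
  then show ?thesis unfolding order_le_def by blast
qed

lemma is_distribution_iff_order_le: "is_distribution u \<longleftrightarrow> (\<exists>r. order_le u r)"
proof
  assume "is_distribution u"
  then obtain C and k :: nat where "\<forall>\<eta>. cmod (u \<eta>) \<le> C * (1 + fnorm \<eta>) ^ k"
    unfolding is_distribution_def by blast
  moreover have eq: "(1 + fnorm \<eta>) ^ k = (1 + fnorm \<eta>) powr real k" for \<eta>
    using fnorm_nonneg[of \<eta>] by (simp add: powr_realpow add_pos_nonneg)
  ultimately have "\<forall>\<eta>. cmod (u \<eta>) \<le> C * (1 + fnorm \<eta>) powr (real k)" by metis
  then show "\<exists>r. order_le u r" unfolding order_le_def by blast
next
  assume "\<exists>r. order_le u r"
  then obtain r where "order_le u r" by blast
  then have "order_le u (real (nat \<lceil>r\<rceil>))" by (rule order_le_mono) linarith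
  then obtain A where A: "\<And>\<eta>. norm (u \<eta>) \<le> A * (1 + fnorm \<eta>) powr (real (nat \<lceil>r\<rceil>))"
    using order_leE by blast
  moreover have "(1 + fnorm \<eta>) ^ k = (1 + fnorm \<eta>) powr real k" for \<eta> k
    using fnorm_nonneg[of \<eta>] by (simp add: powr_realpow add_pos_nonneg)
  ultimately have "\<forall>\<eta>. cmod (u \<eta>) \<le> A * (1 + fnorm \<eta>) ^ (nat \<lceil>r\<rceil>)" by metis
  then show "is_distribution u" unfolding is_distribution_def by blast
qed

lemma is_smooth_iff_order_le: "is_smooth u \<longleftrightarrow> (\<forall>r. order_le u r)"
proof
  assume s: "is_smooth u"
  show "\<forall>r. order_le u r"
  proof
    fix r :: real
    obtain C where "\<forall>\<eta>. cmod (u \<eta>) \<le> C * (1 + fnorm \<eta>) powr (- real (nat \<lceil>-r\<rceil>))"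
      using s unfolding is_smooth_def by blast
    then have "order_le u (- real (nat \<lceil>-r\<rceil>))" unfolding order_le_def by blast
    then show "order_le u r" by (rule order_le_mono) linarith
  qed
next
  assume "\<forall>r. order_le u r"
  then show "is_smooth u" unfolding is_smooth_def order_le_def by blast
qed

definition finite_order :: "(('n::finite) coef \<Rightarrow> 'n coef) \<Rightarrow> bool" where
  "finite_order T \<longleftrightarrow> (\<exists>d. \<forall>u r. order_le u r \<longrightarrow> order_le (T u) (r + d))"

lemma finite_order_distribution: "finite_order T \<Longrightarrow> is_distribution u \<Longrightarrow> is_distribution (T u)"
  unfolding finite_order_def is_distribution_iff_order_le by blast

lemma finite_order_smooth: assumes "finite_order T" "is_smooth u" shows "is_smooth (T u)"
proof -
  obtain d where d: "\<And>u r. order_le u r \<Longrightarrow> order_le (T u) (r + d)" using assms(1) finite_order_def by blast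
  have "order_le (T u) r" for r using d[of u "r - d"] assms(2) unfolding is_smooth_iff_order_le by simp
  then show ?thesis unfolding is_smooth_iff_order_le by blast
qed

lemma finite_order_comp: assumes "finite_order S" "finite_order T" shows "finite_order (S \<circ> T)"
proof -
  obtain d where d: "\<And>u r. order_le u r \<Longrightarrow> order_le (S u) (r + d)" using assms(1) finite_order_def by blast
  obtain e where e: "\<And>u r. order_le u r \<Longrightarrow> order_le (T u) (r + e)" using assms(2) finite_order_def by blast
  have "order_le ((S \<circ> T) u) (r + (e + d))" if "order_le u r" for u r
    using d[OF e[OF that]] by (simp add: add.assoc)
  then show ?thesis unfolding finite_order_def by blast
qed

lemma finite_order_id: "finite_order id" unfolding finite_order_def by (rule exI[of _ 0]) simp

lemma finite_order_comp_list: "(\<And>f. f \<in> set fs \<Longrightarrow> finite_order f) \<Longrightarrow> finite_order (comp_list fs)"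
  unfolding comp_list_def by (induction fs) (auto intro: finite_order_comp finite_order_id)

lemma finite_order_add: assumes "finite_order S" "finite_order T" shows "finite_order (\<lambda>u \<eta>. S u \<eta> + T u \<eta>)"
proof -
  obtain d where d: "\<And>u r. order_le u r \<Longrightarrow> order_le (S u) (r + d)" using assms(1) finite_order_def by blast
  obtain e where e: "\<And>u r. order_le u r \<Longrightarrow> order_le (T u) (r + e)" using assms(2) finite_order_def by blast
  have "order_le (\<lambda>\<eta>. S u \<eta> + T u \<eta>) (r + max d e)" if "order_le u r" for u r
    by (rule order_le_add; rule order_le_mono[OF d[OF that]] order_le_mono[OF e[OF that]]; simp)
  then show ?thesis unfolding finite_order_def by blast
qed

lemma finite_order_cmult: assumes "finite_order T" shows "finite_order (\<lambda>u \<eta>. a * T u \<eta>)"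
  using assms order_le_cmult unfolding finite_order_def by blast

lemma finite_order_Dt: "finite_order (Dt :: ('n::finite) coef \<Rightarrow> 'n coef)"
proof -
  have "order_le (Dt u) (r + 1)" if ur: "order_le u r" for u :: "('n::finite) coef" and r
  proof -
    obtain A where A: "A \<ge> 0" "\<And>\<eta>. norm (u \<eta>) \<le> A * (1 + fnorm \<eta>) powr r" using order_leE[OF ur] by blast
    have "norm (Dt u \<eta>) \<le> A * (1 + fnorm \<eta>) powr (r + 1)" for \<eta>
    proof (cases \<eta>)
      case (Pair \<tau> \<xi>)
      have p: "1 + fnorm \<eta> > 0" using fnorm_nonneg[of \<eta>] by simp
      have "norm (Dt u \<eta>) = real_of_int \<bar>\<tau>\<bar> * norm (u \<eta>)" by (simp add: Dt_def Pair norm_mult)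
      also have "\<dots> \<le> (1 + fnorm \<eta>) * (A * (1 + fnorm \<eta>) powr r)"
        using abs_le_fnorm[of \<tau> \<xi>] A(2)[of \<eta>] Pair
        by (intro mult_mono) (auto simp: A(1))
      also have "\<dots> = A * (1 + fnorm \<eta>) powr (r + 1)" using p by (simp add: powr_add)
      finally show ?thesis .
    qed
    then show ?thesis unfolding order_le_def by blast
  qed
  then show ?thesis unfolding finite_order_def by blast
qed

definition poly_growth :: "(int ^ ('n::finite) \<Rightarrow> complex) \<Rightarrow> bool" where
  "poly_growth p \<longleftrightarrow> (\<exists>C>0. \<exists>\<nu>::real. \<forall>\<xi>. \<xi> \<noteq> 0 \<longrightarrow> cmod (p \<xi>) \<le> C * inorm \<xi> powr \<nu>)"

lemma poly_growth_bound:
  assumes "poly_growth p"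
  obtains C d where "C \<ge> 0" "d \<ge> 0" "\<And>\<xi>. norm (p \<xi>) \<le> C * (1 + inorm \<xi>) powr d"
proof -
  obtain C \<nu> where C: "C > 0" "\<And>\<xi>. \<xi> \<noteq> 0 \<Longrightarrow> cmod (p \<xi>) \<le> C * inorm \<xi> powr \<nu>"
    using assms unfolding poly_growth_def by blast
  have "norm (p \<xi>) \<le> (C + norm (p 0)) * (1 + inorm \<xi>) powr \<bar>\<nu>\<bar>" for \<xi>
  proof (cases "\<xi> = 0")
    case True
    have "1 \<le> (1 + inorm \<xi>) powr \<bar>\<nu>\<bar>" using inorm_nonneg[of \<xi>] by (intro ge_one_powr_ge_zero) auto
    then have "norm (p 0) \<le> norm (p 0) * (1 + inorm \<xi>) powr \<bar>\<nu>\<bar>" by (simp add: mult_le_cancel_left1)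
    also have "\<dots> \<le> (C + norm (p 0)) * (1 + inorm \<xi>) powr \<bar>\<nu>\<bar>" using C(1) by (intro mult_right_mono) auto
    finally show ?thesis using True by simp
  next
    case False
    have ge1: "inorm \<xi> \<ge> 1" by (rule inorm_ge_1[OF False])
    have "inorm \<xi> powr \<nu> \<le> inorm \<xi> powr \<bar>\<nu>\<bar>" using ge1 by (intro powr_mono) auto
    also have "\<dots> \<le> (1 + inorm \<xi>) powr \<bar>\<nu>\<bar>" using ge1 by (intro powr_mono2) auto
    finally have "norm (p \<xi>) \<le> C * (1 + inorm \<xi>) powr \<bar>\<nu>\<bar>"
      using C(2)[OF False] C(1) by (meson mult_left_mono less_imp_le order_trans)
    also have "\<dots> \<le> (C + norm (p 0)) * (1 + inorm \<xi>) powr \<bar>\<nu>\<bar>" by (intro mult_right_mono) auto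
    finally show ?thesis .
  qed
  then show ?thesis using that[of "C + norm (p 0)" "\<bar>\<nu>\<bar>"] C(1) by auto
qed

lemma powr_power_eq: "x > 0 \<Longrightarrow> (x powr a) ^ n = x powr (real n * a)"
  for x a :: real
  by (simp add: powr_realpow[symmetric] powr_powr mult.commute)

lemma poly_growth_power_le:
  assumes Cp: "Cp \<ge> 0" "dp \<ge> 0" "\<And>\<xi>. norm (p \<xi>) \<le> Cp * (1 + inorm \<xi>) powr dp"
    and F: "1 + inorm \<xi> \<le> F"
  shows "(1 + norm (p \<xi>)) ^ j \<le> (1 + Cp) ^ j * F powr (real j * dp)"
proof -
  have F1: "F \<ge> 1" using F inorm_nonneg[of \<xi>] by simp
  have "norm (p \<xi>) \<le> Cp * F powr dp"
    using Cp(3)[of \<xi>] F Cp(1,2) inorm_nonneg[of \<xi>]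
    by (meson mult_left_mono order_trans powr_mono2 add_nonneg_nonneg zero_le_one)
  moreover have "1 \<le> F powr dp" using F1 Cp(2) by (simp add: ge_one_powr_ge_zero)
  ultimately have "1 + norm (p \<xi>) \<le> (1 + Cp) * F powr dp" by (simp add: algebra_simps)
  then have "(1 + norm (p \<xi>)) ^ j \<le> ((1 + Cp) * F powr dp) ^ j"
    using norm_ge_zero[of "p \<xi>"] by (intro power_mono) auto
  also have "\<dots> = (1 + Cp) ^ j * F powr (real j * dp)"
    using F1 by (simp add: power_mult_distrib powr_power_eq)
  finally show ?thesis .
qed

lemma finite_order_PDx: fixes p :: "int ^ ('n::finite) \<Rightarrow> complex" assumes "poly_growth p" shows "finite_order (PDx p)"
proof -
  obtain C d where Cd: "C \<ge> 0" "d \<ge> 0" "\<And>\<xi>. norm (p \<xi>) \<le> C * (1 + inorm \<xi>) powr d"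
    using poly_growth_bound[OF assms] by blast
  have "order_le (PDx p u) (r + d)" if ur: "order_le u r" for u :: "('n::finite) coef" and r
  proof -
    obtain A where A: "A \<ge> 0" "\<And>\<eta>. norm (u \<eta>) \<le> A * (1 + fnorm \<eta>) powr r" using order_leE[OF ur] by blast
    have "norm (PDx p u \<eta>) \<le> (C * A) * (1 + fnorm \<eta>) powr (r + d)" for \<eta>
    proof (cases \<eta>)
      case (Pair \<tau> \<xi>)
      have p: "1 + fnorm \<eta> > 0" using fnorm_nonneg[of \<eta>] by simp
      have "norm (p \<xi>) \<le> C * (1 + fnorm \<eta>) powr d"
        using Cd(3)[of \<xi>] inorm_le_fnorm[of \<xi> \<tau>] Cd(1,2) inorm_nonneg[of \<xi>] Pair
        by (meson add_left_mono less_eq_real_def mult_left_mono order_trans powr_mono2 add_nonneg_nonneg zero_le_one)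
      then have "norm (PDx p u \<eta>) \<le> (C * (1 + fnorm \<eta>) powr d) * (A * (1 + fnorm \<eta>) powr r)"
        unfolding PDx_def Pair using A(2)[of "(\<tau>, \<xi>)"] Pair
        by (simp add: norm_mult) (intro mult_mono, auto simp: Cd(1))
      also have "\<dots> = (C * A) * (1 + fnorm \<eta>) powr (r + d)" using p by (simp add: powr_add mult_ac)
      finally show ?thesis .
    qed
    then show ?thesis unfolding order_le_def by blast
  qed
  then show ?thesis unfolding finite_order_def by blast
qed

lemma powr_ratio_le:
  fixes x :: real
  assumes x: "x \<ge> 0" and N: "real N \<ge> \<bar>r\<bar> + 2"
  shows "(1 + x) powr \<bar>r\<bar> / (1 + x) ^ N \<le> 1 / (1 + x)\<^sup>2"
proof -
  have p: "1 + x > 0" using x by simp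
  have "(1 + x) powr \<bar>r\<bar> * (1 + x)\<^sup>2 = (1 + x) powr (\<bar>r\<bar> + 2)"
    using p by (simp add: powr_add powr_realpow)
  also have "\<dots> \<le> (1 + x) powr (real N)" using x N by (intro powr_mono) auto
  also have "\<dots> = (1 + x) ^ N" using p by (simp add: powr_realpow)
  finally show ?thesis using p by (simp add: field_simps)
qed

lemma finite_order_mult_t:
  assumes sc: "smooth_periodic c"
  shows "finite_order (mult_t c :: ('n::finite) coef \<Rightarrow> 'n coef)"
proof -
  have "order_le (mult_t c u) (r + 0)" if ur: "order_le u r" for u :: "'n coef" and r
  proof -
    obtain A where A: "A \<ge> 0" "\<And>\<eta>. norm (u \<eta>) \<le> A * (1 + fnorm \<eta>) powr r" using order_leE[OF ur] by blast
    define N where "N = nat \<lceil>\<bar>r\<bar>\<rceil> + 2"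
    have N: "real N \<ge> \<bar>r\<bar> + 2" unfolding N_def by linarith
    obtain B where B: "B \<ge> 0" "\<And>\<sigma>. norm (fcoef c \<sigma>) \<le> B / (1 + real_of_int \<bar>\<sigma>\<bar>) ^ N"
      using smooth_periodic_fcoef_decay_divide[OF sc, of N] by blast
    have "norm (mult_t c u (\<tau>, \<xi>)) \<le> (A * B * inv_sq_sum) * (1 + fnorm (\<tau>, \<xi>)) powr r" for \<tau> \<xi>
    proof -
      define P where "P = (1 + fnorm (\<tau>, \<xi>)) powr r"
      have P: "P \<ge> 0" unfolding P_def by simp
      have trm: "norm (fcoef c (\<tau> - \<sigma>) * u (\<sigma>, \<xi>)) \<le> (A * B * P) * inv_sq (\<tau> - \<sigma>)" for \<sigma>
      proof -
        define x where "x = real_of_int \<bar>\<tau> - \<sigma>\<bar>"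
        have x: "x \<ge> 0" unfolding x_def by simp
        have xp: "(1 + x) ^ N > 0" using x by simp
        have "norm (u (\<sigma>, \<xi>)) \<le> A * ((1 + x) powr \<bar>r\<bar> * P)"
          using A(2)[of "(\<sigma>, \<xi>)"] peetre_fnorm_powr[of \<sigma> \<xi> r \<tau>] A(1)
          unfolding x_def P_def by (meson mult_left_mono order_trans)
        moreover have "norm (fcoef c (\<tau> - \<sigma>)) \<le> B / (1 + x) ^ N" using B(2)[of "\<tau> - \<sigma>"] by (simp add: x_def)
        ultimately have "norm (fcoef c (\<tau> - \<sigma>) * u (\<sigma>, \<xi>)) \<le> B / (1 + x) ^ N * (A * ((1 + x) powr \<bar>r\<bar> * P))"
          unfolding norm_mult by (intro mult_mono) (use B A P xp in auto)
        also have "\<dots> = (A * B * P) * ((1 + x) powr \<bar>r\<bar> / (1 + x) ^ N)" by (simp add: field_simps)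
        also have "\<dots> \<le> (A * B * P) * (1 / (1 + x)\<^sup>2)"
          by (intro mult_left_mono powr_ratio_le x N) (use A B P in auto)
        also have "\<dots> = (A * B * P) * inv_sq (\<tau> - \<sigma>)" by (simp add: inv_sq_def x_def)
        finally show ?thesis .
      qed
      have "norm (infsum (\<lambda>\<sigma>. fcoef c (\<tau> - \<sigma>) * u (\<sigma>, \<xi>)) UNIV) \<le> (A * B * P) * inv_sq_sum"
        by (rule norm_infsum_inv_sq_dominated[OF trm])
      then show ?thesis by (simp add: mult_t_def P_def mult_ac)
    qed
    then show ?thesis unfolding order_le_def by (metis add_0_right surj_pair)
  qed
  then show ?thesis unfolding finite_order_def by blast
qed

lemma finite_order_Lop:
  fixes p :: "int ^ ('n::finite) \<Rightarrow> complex"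
  assumes "smooth_periodic c" "poly_growth p"
  shows "finite_order (Lop c p)"
proof -
  have "finite_order (\<lambda>u \<eta>. Dt u \<eta> + (mult_t c \<circ> PDx p) u \<eta>)"
    by (intro finite_order_add finite_order_Dt finite_order_comp finite_order_mult_t finite_order_PDx assms)
  then show ?thesis by (simp add: Lop_def[abs_def] o_def)
qed

lemma finite_order_L0op:
  fixes p :: "int ^ ('n::finite) \<Rightarrow> complex"
  assumes "poly_growth p"
  shows "finite_order (L0op c p)"
proof -
  have "finite_order (\<lambda>u \<eta>. Dt u \<eta> + mean c * PDx p u \<eta>)"
    by (intro finite_order_add finite_order_Dt finite_order_cmult finite_order_PDx assms)
  then show ?thesis by (simp add: L0op_def[abs_def])
qed

section \<open>Eigenfunctions of \<open>D\<^sub>t + q c(t)\<close> and their Fourier coefficients\<close>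

lemma le_sqrt_mult_if_le_both:
  fixes x e M w :: real
  assumes "0 \<le> x" "x \<le> e" "x \<le> M * w\<^sup>2" "0 \<le> w" "0 \<le> M"
  shows "x \<le> sqrt (e * M) * w"
proof -
  have "x\<^sup>2 \<le> e * (M * w\<^sup>2)"
    using assms unfolding power2_eq_square by (intro mult_mono) (auto simp: power2_eq_square)
  also have "\<dots> = (sqrt (e * M) * w)\<^sup>2"
    using assms by (simp add: power_mult_distrib real_sqrt_mult)
  finally show ?thesis
    by (rule power2_le_imp_le) (use assms in \<open>auto intro!: mult_nonneg_nonneg\<close>)
qed

lemma peetre_int: "1 + real_of_int \<bar>\<sigma> - \<tau>0\<bar> \<le> (1 + real_of_int \<bar>\<sigma> - \<rho>\<bar>) * (1 + real_of_int \<bar>\<rho> - \<tau>0\<bar>)"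
proof -
  define a where "a = real_of_int \<bar>\<sigma> - \<rho>\<bar>"
  define b where "b = real_of_int \<bar>\<rho> - \<tau>0\<bar>"
  have "real_of_int \<bar>\<sigma> - \<tau>0\<bar> \<le> a + b" unfolding a_def b_def by linarith
  moreover have "0 \<le> a * b" unfolding a_def b_def by simp
  moreover have "(1 + a) * (1 + b) = 1 + a + b + a * b" by (simp add: algebra_simps)
  ultimately show ?thesis unfolding a_def[symmetric] b_def[symmetric] by linarith
qed

lemma norm_convolution_weighted_le:
  fixes a w :: "int \<Rightarrow> complex"
  assumes a: "\<And>k. norm (a k) * (1 + real_of_int \<bar>k\<bar>) ^ (j + 2) \<le> B"
    and w: "\<And>\<rho>. norm (w \<rho>) * (1 + real_of_int \<bar>\<rho> - \<tau>0\<bar>) ^ j \<le> K"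
  shows "norm (infsum (\<lambda>\<rho>. a (\<sigma> - \<rho>) * w \<rho>) UNIV) * (1 + real_of_int \<bar>\<sigma> - \<tau>0\<bar>) ^ j
    \<le> B * K * inv_sq_sum"
proof -
  define x where "x = real_of_int \<bar>\<sigma> - \<tau>0\<bar>"
  have x: "x \<ge> 0" unfolding x_def by simp
  have B: "B \<ge> 0" using a[of 0] by (auto intro: order_trans[rotated])
  have K: "K \<ge> 0" using w[of \<tau>0] by (auto intro: order_trans[rotated])
  have "norm (a (\<sigma> - \<rho>) * w \<rho>) \<le> (B * K / (1 + x) ^ j) * inv_sq (\<sigma> - \<rho>)" for \<rho>
  proof -
    define s t where "s = real_of_int \<bar>\<sigma> - \<rho>\<bar>" and "t = real_of_int \<bar>\<rho> - \<tau>0\<bar>"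
    have st: "s \<ge> 0" "t \<ge> 0" unfolding s_def t_def by auto
    have "(1 + x) ^ j \<le> (1 + s) ^ j * (1 + t) ^ j"
      unfolding power_mult_distrib[symmetric] s_def t_def x_def
      by (rule power_mono[OF peetre_int]) simp
    then have "norm (a (\<sigma> - \<rho>) * w \<rho>) * (1 + x) ^ j \<le>
        norm (a (\<sigma> - \<rho>)) * norm (w \<rho>) * ((1 + s) ^ j * (1 + t) ^ j)"
      unfolding norm_mult by (rule mult_left_mono) simp
    also have "\<dots> = (norm (a (\<sigma> - \<rho>)) * (1 + s) ^ (j + 2)) * (norm (w \<rho>) * (1 + t) ^ j) / (1 + s)\<^sup>2"
    proof -
      have "(1 + s) ^ (j + 2) = (1 + s) ^ j * (1 + s)\<^sup>2" by (rule power_add)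
      moreover have "(1 + s)\<^sup>2 \<noteq> 0" using st by simp
      ultimately show ?thesis by (simp add: field_simps)
    qed
    also have "\<dots> \<le> B * K / (1 + s)\<^sup>2"
      using st a[of "\<sigma> - \<rho>"] w[of \<rho>] B unfolding s_def t_def
      by (intro divide_right_mono mult_mono) auto
    finally show ?thesis
      using x by (simp add: inv_sq_def s_def field_simps)
  qed
  then have "norm (infsum (\<lambda>\<rho>. a (\<sigma> - \<rho>) * w \<rho>) UNIV) \<le> (B * K / (1 + x) ^ j) * inv_sq_sum"
    by (rule norm_infsum_inv_sq_dominated)
  then show ?thesis
    using x unfolding x_def[symmetric] by (simp add: field_simps)
qed

context
  fixes c :: "real \<Rightarrow> complex"
  assumes sc: "smooth_periodic c"
begin

definition centered_prim :: "real \<Rightarrow> complex" where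
  "centered_prim t = integral {0..t} (\<lambda>s. c s - mean c)"

lemma centered_prim_has_vector_derivative: "t \<in> {0..2*pi} \<Longrightarrow> (centered_prim has_vector_derivative (c t - mean c)) (at t within {0..2*pi})"
  unfolding centered_prim_def by (rule integral_has_vector_derivative) (rule continuous_on_diff[OF smooth_periodic_continuous_on[OF sc] continuous_on_const])

lemma continuous_on_centered_prim: "continuous_on {0..2*pi} centered_prim"
  by (rule continuous_on_vector_derivative[OF centered_prim_has_vector_derivative])

lemma centered_prim_0: "centered_prim 0 = 0" by (simp add: centered_prim_def)

lemma centered_prim_2pi: "centered_prim (2*pi) = 0"
proof -
  have ic: "c integrable_on {0..2*pi}" by (rule integrable_continuous_real[OF smooth_periodic_continuous_on[OF sc]])
  have "centered_prim (2*pi) = integral {0..2*pi} c - integral {0..2*pi} (\<lambda>s. mean c)"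
    unfolding centered_prim_def by (rule integral_diff[OF ic integrable_const_ivl])
  also have "\<dots> = 0" by (simp add: mean_def scaleR_conv_of_real)
  finally show ?thesis .
qed

definition peak :: "complex \<Rightarrow> real" where
  "peak q = (SOME t. t \<in> {0..2*pi} \<and> (\<forall>s\<in>{0..2*pi}. Re (- \<i> * q * centered_prim s) \<le> Re (- \<i> * q * centered_prim t)))"

lemma peak: "peak q \<in> {0..2*pi}" "\<And>s. s \<in> {0..2*pi} \<Longrightarrow> Re (- \<i> * q * centered_prim s) \<le> Re (- \<i> * q * centered_prim (peak q))"
proof -
  have "\<exists>t\<in>{0..2*pi}. \<forall>s\<in>{0..2*pi}. Re (- \<i> * q * centered_prim s) \<le> Re (- \<i> * q * centered_prim t)"
    by (rule continuous_attains_sup) (auto intro!: continuous_intros continuous_on_centered_prim)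
  then have "\<exists>t. t \<in> {0..2*pi} \<and> (\<forall>s\<in>{0..2*pi}. Re (- \<i> * q * centered_prim s) \<le> Re (- \<i> * q * centered_prim t))" by blast
  from someI_ex[OF this] show "peak q \<in> {0..2*pi}" "\<And>s. s \<in> {0..2*pi} \<Longrightarrow> Re (- \<i> * q * centered_prim s) \<le> Re (- \<i> * q * centered_prim (peak q))"
    unfolding peak_def by blast+
qed

text \<open>\<open>eigenfun q \<tau>0\<close> solves \<open>D\<^sub>t W + q c(t) W = (\<tau>0 + q mean c) W\<close>; the real constant in the
  exponent normalises \<open>W\<close> so that its modulus is at most \<open>1\<close>, with equality at \<open>peak q\<close>.\<close>

definition eigenfun :: "complex \<Rightarrow> int \<Rightarrow> real \<Rightarrow> complex" where
  "eigenfun q \<tau>0 t = expi \<tau>0 t * exp (- \<i> * q * centered_prim t - of_real (Re (- \<i> * q * centered_prim (peak q))))"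

lemma norm_eigenfun_le_1: "t \<in> {0..2*pi} \<Longrightarrow> norm (eigenfun q \<tau>0 t) \<le> 1"
  unfolding eigenfun_def norm_mult norm_expi norm_exp_eq_Re using peak(2)[of t q] by simp

lemma norm_eigenfun_peak: "norm (eigenfun q \<tau>0 (peak q)) = 1"
  unfolding eigenfun_def norm_mult norm_expi norm_exp_eq_Re by simp

lemma eigenfun_has_vector_derivative:
  assumes t: "t \<in> {0..2*pi}"
  shows "(eigenfun q \<tau>0 has_vector_derivative ((\<i> * of_int \<tau>0 - \<i> * q * (c t - mean c)) * eigenfun q \<tau>0 t)) (at t within {0..2*pi})"
proof -
  define a :: complex where "a = of_real (Re (- \<i> * q * centered_prim (peak q)))"
  define E where "E t = exp (- \<i> * q * centered_prim t - a)" for t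
  define D where "D = - \<i> * q * (c t - mean c)"
  have W: "eigenfun q \<tau>0 = (\<lambda>t. expi \<tau>0 t * E t)" unfolding eigenfun_def E_def a_def by (rule ext) simp
  have g0: "((\<lambda>t. - \<i> * q * centered_prim t) has_vector_derivative D) (at t within {0..2*pi})"
    unfolding D_def by (rule has_vector_derivative_mult_right[OF centered_prim_has_vector_derivative[OF t]])
  have g1: "((\<lambda>t. - \<i> * q * centered_prim t - a) has_vector_derivative (D - 0)) (at t within {0..2*pi})"
    by (rule has_vector_derivative_diff[OF g0 has_vector_derivative_const])
  have e: "(exp has_field_derivative exp (- \<i> * q * centered_prim t - a)) (at (- \<i> * q * centered_prim t - a) within X)" for X
    by (rule has_field_derivative_at_within[OF DERIV_exp])
  have "(((\<lambda>t. exp t) \<circ> (\<lambda>t. - \<i> * q * centered_prim t - a)) has_vector_derivative ((D - 0) * exp (- \<i> * q * centered_prim t - a))) (at t within {0..2*pi})"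
    by (rule field_vector_diff_chain_within[OF g1 e])
  then have gE: "(E has_vector_derivative (D * E t)) (at t within {0..2*pi})"
    unfolding E_def o_def by simp
  have "((\<lambda>t. expi \<tau>0 t * E t) has_vector_derivative (expi \<tau>0 t * (D * E t) + (\<i> * of_int \<tau>0 * expi \<tau>0 t) * E t)) (at t within {0..2*pi})"
    by (rule has_vector_derivative_mult[OF expi_has_vector_derivative gE])
  moreover have "expi \<tau>0 t * (D * E t) + (\<i> * of_int \<tau>0 * expi \<tau>0 t) * E t = (\<i> * of_int \<tau>0 - \<i> * q * (c t - mean c)) * (expi \<tau>0 t * E t)"
    unfolding D_def by algebra
  ultimately show ?thesis unfolding W by simp
qed

lemma continuous_on_eigenfun: "continuous_on {0..2*pi} (eigenfun q \<tau>0)"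
  by (rule continuous_on_vector_derivative[OF eigenfun_has_vector_derivative])

lemma eigenfun_0_2pi: "eigenfun q \<tau>0 0 = eigenfun q \<tau>0 (2*pi)"
  by (simp add: eigenfun_def centered_prim_0 centered_prim_2pi)

lemma fcoef_eigenfun_eq:
  "of_int \<sigma> * fcoef (eigenfun q \<tau>0) \<sigma> + q * infsum (\<lambda>\<rho>. fcoef c (\<sigma> - \<rho>) * fcoef (eigenfun q \<tau>0) \<rho>) UNIV
     = (of_int \<tau>0 + mean c * q) * fcoef (eigenfun q \<tau>0) \<sigma>"
proof -
  let ?W = "eigenfun q \<tau>0"
  have d: "fcoef (\<lambda>t. (\<i> * of_int \<tau>0 - \<i> * q * (c t - mean c)) * ?W t) \<sigma> = \<i> * of_int \<sigma> * fcoef ?W \<sigma>"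
    by (rule fcoef_derivative[OF eigenfun_has_vector_derivative _ eigenfun_0_2pi]) (auto intro!: continuous_intros smooth_periodic_continuous_on[OF sc] continuous_on_eigenfun)
  have "(\<lambda>t. (\<i> * of_int \<tau>0 - \<i> * q * (c t - mean c)) * ?W t) =
        (\<lambda>t. (\<i> * of_int \<tau>0 + \<i> * q * mean c) * ?W t - (\<i> * q) * (c t * ?W t))"
    by (rule ext) (simp add: algebra_simps)
  moreover have "fcoef (\<lambda>t. (\<i> * of_int \<tau>0 + \<i> * q * mean c) * ?W t - (\<i> * q) * (c t * ?W t)) \<sigma> =
        (\<i> * of_int \<tau>0 + \<i> * q * mean c) * fcoef ?W \<sigma> - (\<i> * q) * fcoef (\<lambda>t. c t * ?W t) \<sigma>"
  proof -
    have c1: "continuous_on {0..2*pi} (\<lambda>t. (\<i> * of_int \<tau>0 + \<i> * q * mean c) * ?W t)"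
      by (intro continuous_intros continuous_on_eigenfun)
    have c2: "continuous_on {0..2*pi} (\<lambda>t. (\<i> * q) * (c t * ?W t))"
      by (intro continuous_intros continuous_on_eigenfun smooth_periodic_continuous_on[OF sc])
    show ?thesis by (simp only: fcoef_diff[OF c1 c2] fcoef_cmult)
  qed
  ultimately have "fcoef (\<lambda>t. (\<i> * of_int \<tau>0 - \<i> * q * (c t - mean c)) * ?W t) \<sigma> =
        (\<i> * of_int \<tau>0 + \<i> * q * mean c) * fcoef ?W \<sigma> - (\<i> * q) * fcoef (\<lambda>t. c t * ?W t) \<sigma>"
    by simp
  moreover have "fcoef (\<lambda>t. c t * ?W t) \<sigma> = infsum (\<lambda>\<rho>. fcoef c (\<sigma> - \<rho>) * fcoef ?W \<rho>) UNIV"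
    by (rule smooth_periodic_fcoef_mult[OF sc continuous_on_eigenfun])
  ultimately have "\<i> * (of_int \<sigma> * fcoef ?W \<sigma> + q * infsum (\<lambda>\<rho>. fcoef c (\<sigma> - \<rho>) * fcoef ?W \<rho>) UNIV)
      = \<i> * ((of_int \<tau>0 + mean c * q) * fcoef ?W \<sigma>)"
    using d by (simp add: algebra_simps)
  then show ?thesis by simp
qed


lemma norm_fcoef_eigenfun_le_1: "norm (fcoef (eigenfun q \<tau>0) \<sigma>) \<le> 1"
  by (rule norm_fcoef_le[OF continuous_on_eigenfun norm_eigenfun_le_1])

text \<open>By the eigenvalue equation, \<open>(\<sigma> - \<tau>0) W(\<sigma>)\<close> is \<open>q\<close> times a combination of \<open>W(\<sigma>)\<close> and the
  convolution of \<open>fcoef c\<close> with \<open>W\<close>, and the convolution inherits the weight of order \<open>j\<close>.\<close>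

lemma fcoef_eigenfun_decay_step:
  assumes K: "K \<ge> 0"
    "\<And>q \<tau>0 \<sigma>. norm (fcoef (eigenfun q \<tau>0) \<sigma>) * (1 + real_of_int \<bar>\<sigma> - \<tau>0\<bar>) ^ j \<le> K * (1 + norm q) ^ j"
  shows "\<exists>K'\<ge>0. \<forall>q \<tau>0 \<sigma>.
    norm (fcoef (eigenfun q \<tau>0) \<sigma>) * (1 + real_of_int \<bar>\<sigma> - \<tau>0\<bar>) ^ Suc j \<le> K' * (1 + norm q) ^ Suc j"
proof -
  obtain B where B: "B \<ge> 0" "\<And>k. norm (fcoef c k) * (1 + real_of_int \<bar>k\<bar>) ^ (j + 2) \<le> B"
    using smooth_periodic_fcoef_decay[OF sc, of "j + 2"] by blast
  define K' where "K' = K * (1 + norm (mean c) + B * inv_sq_sum)"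
  have "norm (fcoef (eigenfun q \<tau>0) \<sigma>) * (1 + real_of_int \<bar>\<sigma> - \<tau>0\<bar>) ^ Suc j \<le> K' * (1 + norm q) ^ Suc j"
    for q \<tau>0 \<sigma>
  proof -
    define W where "W = fcoef (eigenfun q \<tau>0)"
    define S where "S = infsum (\<lambda>\<rho>. fcoef c (\<sigma> - \<rho>) * W \<rho>) UNIV"
    define Q where "Q = (1 + norm q) ^ j"
    define x where "x = real_of_int \<bar>\<sigma> - \<tau>0\<bar>"
    have x: "x \<ge> 0" and Q: "Q \<ge> 0" unfolding x_def Q_def by simp_all
    have IH: "norm (W \<sigma>) * (1 + x) ^ j \<le> K * Q"
      unfolding W_def Q_def x_def by (rule K(2))
    have S: "norm S * (1 + x) ^ j \<le> B * (K * Q) * inv_sq_sum"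
      unfolding S_def x_def using B(2) K(2) unfolding W_def Q_def by (rule norm_convolution_weighted_le)
    have "of_int (\<sigma> - \<tau>0) * W \<sigma> = q * (mean c * W \<sigma> - S)"
      using fcoef_eigenfun_eq[of \<sigma> q \<tau>0] unfolding W_def S_def by (simp add: algebra_simps)
    then have "x * norm (W \<sigma>) \<le> norm q * (norm (mean c) * norm (W \<sigma>) + norm S)"
      unfolding x_def by (metis norm_mult norm_of_int of_int_abs mult_left_mono norm_ge_zero norm_triangle_ineq4)
    then have "x * norm (W \<sigma>) * (1 + x) ^ j
        \<le> norm q * (norm (mean c) * (norm (W \<sigma>) * (1 + x) ^ j) + norm S * (1 + x) ^ j)"
      using mult_right_mono[of _ _ "(1 + x) ^ j"] x by (fastforce simp: algebra_simps)
    also have "\<dots> \<le> norm q * (norm (mean c) * (K * Q) + B * (K * Q) * inv_sq_sum)"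
      using IH S by (intro mult_left_mono add_mono) auto
    finally have step: "x * norm (W \<sigma>) * (1 + x) ^ j \<le> norm q * (K * Q) * (norm (mean c) + B * inv_sq_sum)"
      by (simp add: algebra_simps)
    have "norm (W \<sigma>) * (1 + x) ^ Suc j = norm (W \<sigma>) * (1 + x) ^ j + x * norm (W \<sigma>) * (1 + x) ^ j"
      by (simp add: algebra_simps)
    also have "\<dots> \<le> K * Q + norm q * (K * Q) * (norm (mean c) + B * inv_sq_sum)"
      using IH step by simp
    also have "\<dots> \<le> K * Q * (1 + norm q) * (1 + norm (mean c) + B * inv_sq_sum)"
      using K(1) Q B(1) inv_sq_sum_nonneg by (simp add: algebra_simps)
    also have "\<dots> = K' * (1 + norm q) ^ Suc j" unfolding K'_def Q_def by (simp add: algebra_simps)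
    finally show ?thesis unfolding W_def x_def .
  qed
  moreover have "K' \<ge> 0" unfolding K'_def using K B inv_sq_sum_nonneg by simp
  ultimately show ?thesis by blast
qed

lemma fcoef_eigenfun_decay:
  "\<exists>K\<ge>0. \<forall>q \<tau>0 \<sigma>. norm (fcoef (eigenfun q \<tau>0) \<sigma>) * (1 + real_of_int \<bar>\<sigma> - \<tau>0\<bar>) ^ j \<le> K * (1 + norm q) ^ j"
proof (induction j)
  case 0
  then show ?case using norm_fcoef_eigenfun_le_1 by (intro exI[of _ 1]) auto
next
  case (Suc j)
  then show ?case using fcoef_eigenfun_decay_step by blast
qed

lemma fcoef_eigenfun_inv_sq_bound:
  obtains K where "K \<ge> 0" "\<And>q \<tau>0 \<sigma>. norm (fcoef (eigenfun q \<tau>0) \<sigma>) \<le> K * (1 + norm q) ^ 4 * (inv_sq (\<tau>0 - \<sigma>))\<^sup>2"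
proof -
  obtain K where K: "K \<ge> 0" "\<And>q \<tau>0 \<sigma>. norm (fcoef (eigenfun q \<tau>0) \<sigma>) * (1 + real_of_int \<bar>\<sigma> - \<tau>0\<bar>) ^ 4 \<le> K * (1 + norm q) ^ 4"
    using fcoef_eigenfun_decay[of 4] by blast
  have "norm (fcoef (eigenfun q \<tau>0) \<sigma>) \<le> K * (1 + norm q) ^ 4 * (inv_sq (\<tau>0 - \<sigma>))\<^sup>2" for q \<tau>0 \<sigma>
  proof -
    have p: "(1 + real_of_int \<bar>\<sigma> - \<tau>0\<bar>) ^ 4 > 0" by (simp add: add_pos_nonneg)
    have "\<bar>\<tau>0 - \<sigma>\<bar> = \<bar>\<sigma> - \<tau>0\<bar>" by simp
    then have w: "(inv_sq (\<tau>0 - \<sigma>))\<^sup>2 * (1 + real_of_int \<bar>\<sigma> - \<tau>0\<bar>) ^ 4 = 1"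
      unfolding inv_sq_def using p by (simp add: power_divide flip: power_mult)
    have "norm (fcoef (eigenfun q \<tau>0) \<sigma>) = (norm (fcoef (eigenfun q \<tau>0) \<sigma>) * (1 + real_of_int \<bar>\<sigma> - \<tau>0\<bar>) ^ 4) * (inv_sq (\<tau>0 - \<sigma>))\<^sup>2"
      using w by (simp add: mult_ac)
    also have "\<dots> \<le> K * (1 + norm q) ^ 4 * (inv_sq (\<tau>0 - \<sigma>))\<^sup>2"
      by (rule mult_right_mono[OF K(2)]) simp
    finally show ?thesis .
  qed
  then show ?thesis using that K(1) by blast
qed

lemma summable_norm_fcoef_eigenfun: "(\<lambda>\<sigma>. norm (fcoef (eigenfun q \<tau>0) \<sigma>)) summable_on UNIV"
proof -
  obtain K where K: "K \<ge> 0" "\<And>q \<tau>0 \<sigma>. norm (fcoef (eigenfun q \<tau>0) \<sigma>) \<le> K * (1 + norm q) ^ 4 * (inv_sq (\<tau>0 - \<sigma>))\<^sup>2"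
    using fcoef_eigenfun_inv_sq_bound by blast
  have "norm (fcoef (eigenfun q \<tau>0) \<sigma>) \<le> (K * (1 + norm q) ^ 4) * inv_sq (\<tau>0 - \<sigma>)" for \<sigma>
  proof -
    have "inv_sq (\<tau>0 - \<sigma>) \<le> 1" unfolding inv_sq_def by (simp add: field_simps)
    then have "(inv_sq (\<tau>0 - \<sigma>))\<^sup>2 \<le> inv_sq (\<tau>0 - \<sigma>)" using inv_sq_pos[of "\<tau>0 - \<sigma>"]
      by (simp add: power2_eq_square mult_le_cancel_right1)
    then show ?thesis using K(2)[of q \<tau>0 \<sigma>] K(1) by (meson mult_left_mono order_trans zero_le_power add_nonneg_nonneg norm_ge_zero zero_le_one mult_nonneg_nonneg)
  qed
  then show ?thesis by (rule summable_norm_inv_sq_dominated)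
qed

text \<open>Interpolate the bound \<open>e\<close> with the quadratic decay of the coefficients and sum the Fourier
  series at the peak, where \<open>\<bar>W\<bar> = 1\<close>.\<close>

lemma one_le_sup_fcoef_eigenfun:
  "\<exists>K\<ge>0. \<forall>q \<tau>0 e. (\<forall>\<sigma>. norm (fcoef (eigenfun q \<tau>0) \<sigma>) \<le> e) \<longrightarrow>
     1 \<le> sqrt (e * (K * (1 + norm q) ^ 4)) * inv_sq_sum"
proof -
  obtain K where K: "K \<ge> 0"
    "\<And>q \<tau>0 \<sigma>. norm (fcoef (eigenfun q \<tau>0) \<sigma>) \<le> K * (1 + norm q) ^ 4 * (inv_sq (\<tau>0 - \<sigma>))\<^sup>2"
    using fcoef_eigenfun_inv_sq_bound by blast
  have "1 \<le> sqrt (e * (K * (1 + norm q) ^ 4)) * inv_sq_sum"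
    if e: "\<And>\<sigma>. norm (fcoef (eigenfun q \<tau>0) \<sigma>) \<le> e" for q \<tau>0 e
  proof -
    define W where "W = fcoef (eigenfun q \<tau>0)"
    have t: "peak q \<in> {0..2*pi}" by (rule peak(1))
    have "1 = norm (eigenfun q \<tau>0 (peak q))" using norm_eigenfun_peak by simp
    also have "\<dots> = norm (infsum (\<lambda>\<sigma>. W \<sigma> * expi \<sigma> (peak q)) UNIV)"
      unfolding W_def
      by (subst fourier_inversion[OF continuous_on_eigenfun eigenfun_0_2pi summable_norm_fcoef_eigenfun t])
        simp
    also have "\<dots> \<le> sqrt (e * (K * (1 + norm q) ^ 4)) * inv_sq_sum"
    proof (rule norm_infsum_inv_sq_dominated)
      show "norm (W \<sigma> * expi \<sigma> (peak q)) \<le> sqrt (e * (K * (1 + norm q) ^ 4)) * inv_sq (\<tau>0 - \<sigma>)" for \<sigma>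
        unfolding norm_mult norm_expi mult_1_right W_def
        by (rule le_sqrt_mult_if_le_both[OF norm_ge_zero e K(2)])
          (use K(1) inv_sq_pos[of "\<tau>0 - \<sigma>"] in auto)
    qed
    finally show ?thesis .
  qed
  then show ?thesis using K(1) by blast
qed

lemma fcoef_eigenfun_lower_bound:
  "\<exists>L>0. \<forall>q \<tau>0. \<exists>\<sigma>. L / (1 + norm q) ^ 4 \<le> norm (fcoef (eigenfun q \<tau>0) \<sigma>)"
proof -
  obtain K where K: "K \<ge> 0" "\<And>q \<tau>0 e. (\<forall>\<sigma>. norm (fcoef (eigenfun q \<tau>0) \<sigma>) \<le> e) \<Longrightarrow>
     1 \<le> sqrt (e * (K * (1 + norm q) ^ 4)) * inv_sq_sum"
    using one_le_sup_fcoef_eigenfun by blast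
  define Z where "Z = inv_sq_sum"
  have Z: "Z \<ge> 0" unfolding Z_def by (rule inv_sq_sum_nonneg)
  define L where "L = 1 / (4 * (K + 1) * (Z + 1)\<^sup>2)"
  have L: "L > 0" unfolding L_def using K(1) Z by (simp add: add_pos_nonneg)
  have "\<exists>\<sigma>. L / (1 + norm q) ^ 4 \<le> norm (fcoef (eigenfun q \<tau>0) \<sigma>)" for q \<tau>0
  proof (rule ccontr)
    assume "\<not> ?thesis"
    then have "1 \<le> sqrt (L / (1 + norm q) ^ 4 * (K * (1 + norm q) ^ 4)) * Z"
      unfolding Z_def by (intro K(2)[of q \<tau>0]) (auto simp: not_le less_imp_le)
    also have "L / (1 + norm q) ^ 4 * (K * (1 + norm q) ^ 4) = L * K"
      using norm_ge_zero[of q] by (simp add: add_nonneg_eq_0_iff)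
    finally have one: "1 \<le> sqrt (L * K) * Z" .
    have "L * K = K / (K + 1) * (1 / (2 * (Z + 1)))\<^sup>2"
      unfolding L_def by (simp add: power2_eq_square algebra_simps)
    also have "\<dots> \<le> (1 / (2 * (Z + 1)))\<^sup>2"
      using K(1) by (intro mult_left_le_one_le) auto
    finally have "sqrt (L * K) \<le> sqrt ((1 / (2 * (Z + 1)))\<^sup>2)"
      by (rule real_sqrt_le_mono)
    also have "\<dots> = 1 / (2 * (Z + 1))" using Z by simp
    finally have "sqrt (L * K) \<le> 1 / (2 * (Z + 1))" .
    then have "sqrt (L * K) * Z \<le> Z / (2 * (Z + 1))"
      using mult_right_mono[OF _ Z] by fastforce
    also have "\<dots> < 1" using Z by (simp add: field_simps)
    finally show False using one by simp
  qed
  then show ?thesis using L by blast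
qed

end

lemma not_order_le_exceeds_far_out:
  assumes "order_le u r0" "\<not> order_le u r"
  shows "\<exists>\<eta>. fnorm \<eta> > R \<and> norm (u \<eta>) > A * (1 + fnorm \<eta>) powr r"
proof -
  obtain A0 where A0: "A0 \<ge> 0" "\<And>\<eta>. norm (u \<eta>) \<le> A0 * (1 + fnorm \<eta>) powr r0"
    using order_leE[OF assms(1)] by blast
  have rr: "r < r0" using assms order_le_mono by (meson not_less)
  define R' where "R' = max R 0"
  define A' where "A' = max A (A0 * (1 + R') powr (r0 - r))"
  obtain \<eta> where uA: "norm (u \<eta>) > A' * (1 + fnorm \<eta>) powr r"
    using assms(2) unfolding order_le_def by (meson not_le)
  define P where "P = 1 + fnorm \<eta>"
  have P: "P \<ge> 1" unfolding P_def using fnorm_nonneg[of \<eta>] by simp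
  have "fnorm \<eta> > R'"
  proof (rule ccontr)
    assume "\<not> fnorm \<eta> > R'"
    then have "P powr (r0 - r) \<le> (1 + R') powr (r0 - r)"
      using rr P unfolding P_def by (intro powr_mono2) auto
    then have "A0 * P powr (r0 - r) * P powr r \<le> A' * P powr r"
      using A0(1) unfolding A'_def by (intro mult_right_mono) (auto intro: order_trans[OF mult_left_mono])
    also have "A0 * P powr (r0 - r) * P powr r = A0 * P powr r0"
      using P by (simp add: mult.assoc powr_add[symmetric])
    finally show False using uA A0(2)[of \<eta>] unfolding P_def by simp
  qed
  moreover have "A * (1 + fnorm \<eta>) powr r \<le> A' * (1 + fnorm \<eta>) powr r"
    unfolding A'_def by (intro mult_right_mono) auto
  then have "A * (1 + fnorm \<eta>) powr r < norm (u \<eta>)" using uA by (rule le_less_trans)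
  ultimately show ?thesis unfolding R'_def by (intro exI[of _ \<eta>]) auto
qed

section \<open>Global hypoellipticity passes from \<open>L\<close> to \<open>L\<^sub>0\<close>\<close>

lemma small_multiplier_if_not_smooth:
  fixes s :: "int \<times> (int ^ 'n::finite) \<Rightarrow> complex"
  assumes u: "is_distribution u" "\<not> is_smooth u" and su: "is_smooth (\<lambda>\<eta>. s \<eta> * u \<eta>)"
  shows "\<exists>\<eta>. fnorm \<eta> > R \<and> norm (s \<eta>) \<le> (1 + fnorm \<eta>) powr (- real N)"
proof -
  obtain r where nb: "\<not> order_le u r" using u(2) unfolding is_smooth_iff_order_le by blast
  obtain r0 where b0: "order_le u r0" using u(1) unfolding is_distribution_iff_order_le by blast
  obtain B where B: "B \<ge> 0" "\<And>\<eta>. norm (s \<eta> * u \<eta>) \<le> B * (1 + fnorm \<eta>) powr (r - real N)"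
    using su unfolding is_smooth_iff_order_le by (meson order_leE)
  define A where "A = max B 1"
  obtain \<eta> where far: "fnorm \<eta> > R" and uA: "norm (u \<eta>) > A * (1 + fnorm \<eta>) powr r"
    using not_order_le_exceeds_far_out[OF b0 nb] by blast
  define P where "P = 1 + fnorm \<eta>"
  have P: "P \<ge> 1" unfolding P_def using fnorm_nonneg[of \<eta>] by simp
  have "norm (s \<eta>) * norm (u \<eta>) \<le> A * P powr (r - real N)"
    using B(2)[of \<eta>] unfolding P_def norm_mult A_def
    by (meson order_trans max.cobounded1 mult_right_mono powr_ge_zero)
  also have "\<dots> = P powr (- real N) * (A * P powr r)"
    using P by (simp add: powr_add[symmetric] mult_ac)
  finally have "norm (s \<eta>) * norm (u \<eta>) \<le> P powr (- real N) * (A * P powr r)" .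
  moreover have "norm (s \<eta>) * (A * P powr r) \<le> norm (s \<eta>) * norm (u \<eta>)"
    using uA unfolding P_def by (intro mult_left_mono) auto
  moreover have "A * P powr r > 0" using P unfolding A_def by simp
  ultimately have "norm (s \<eta>) \<le> P powr (- real N)" by (meson mult_right_le_imp_le order_trans)
  then show ?thesis using far unfolding P_def by blast
qed

lemma powr_diff_index_bounded:
  fixes f :: "nat \<Rightarrow> real"
  assumes f: "\<And>k. f k \<ge> 1"
  shows "\<exists>M\<ge>0. \<forall>k. f k powr (G - real k) \<le> M"
proof (intro exI conjI allI)
  define M where "M = 1 + (\<Sum>k<nat \<lceil>G\<rceil>. f k powr G)"
  show "M \<ge> 0" unfolding M_def by (simp add: add_nonneg_nonneg sum_nonneg)
  fix k
  show "f k powr (G - real k) \<le> M"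
  proof (cases "k < nat \<lceil>G\<rceil>")
    case True
    have "f k powr (G - real k) \<le> f k powr G"
      using f[of k] by (intro powr_mono) auto
    also have "\<dots> \<le> (\<Sum>k<nat \<lceil>G\<rceil>. f k powr G)"
      using True by (intro member_le_sum) auto
    finally show ?thesis unfolding M_def by simp
  next
    case False
    then have "G - real k \<le> 0" by linarith
    then have "f k powr (G - real k) \<le> f k powr 0"
      using f[of k] by (intro powr_mono) auto
    moreover have "0 \<le> (\<Sum>k<nat \<lceil>G\<rceil>. f k powr G)" by (intro sum_nonneg) simp
    ultimately show ?thesis unfolding M_def using f[of k] by simp
  qed
qed

lemma le_mult_powr_minus_if_mult_power_le:
  fixes a F B :: real
  assumes "F > 0" "a * F ^ j \<le> B"
  shows "a \<le> B * F powr (- real j)"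
proof -
  have "a = a * F ^ j * F powr (- real j)"
    using assms(1) by (simp add: powr_minus powr_realpow)
  also have "\<dots> \<le> B * F powr (- real j)"
    using assms(2) by (rule mult_right_mono) simp
  finally show ?thesis .
qed

context
  fixes c :: "real \<Rightarrow> complex" and p :: "int ^ ('n::finite) \<Rightarrow> complex"
  assumes sc: "smooth_periodic c" and pg: "poly_growth p"
begin

definition symbol0 :: "int \<Rightarrow> int ^ 'n \<Rightarrow> complex" where "symbol0 \<tau> \<xi> = of_int \<tau> + mean c * p \<xi>"

lemma L0op_eq_symbol0: "L0op c p u (\<tau>, \<xi>) = symbol0 \<tau> \<xi> * u (\<tau>, \<xi>)"
  by (simp add: L0op_def Dt_def PDx_def symbol0_def algebra_simps)

lemma inorm_large_if_symbol0_small: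
  obtains R1 where "\<And>\<tau> \<xi>. fnorm (\<tau>, \<xi>) > R1 \<Longrightarrow> norm (symbol0 \<tau> \<xi>) \<le> 1 \<Longrightarrow> inorm \<xi> \<ge> R"
proof -
  obtain Cp dp where Cp: "Cp \<ge> 0" "dp \<ge> 0" "\<And>\<xi>. norm (p \<xi>) \<le> Cp * (1 + inorm \<xi>) powr dp"
    using poly_growth_bound[OF pg] by blast
  define R' where "R' = max R 0"
  have "inorm \<xi> \<ge> R"
    if big: "fnorm (\<tau>, \<xi>) > 1 + norm (mean c) * Cp * (1 + R') powr dp + R'"
      and small: "norm (symbol0 \<tau> \<xi>) \<le> 1" for \<tau> \<xi>
  proof (rule ccontr)
    assume "\<not> inorm \<xi> \<ge> R"
    then have lt: "inorm \<xi> < R'" unfolding R'_def by simp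
    have "norm (p \<xi>) \<le> Cp * (1 + R') powr dp"
      using Cp(3)[of \<xi>] Cp(1,2) lt inorm_nonneg[of \<xi>]
      by (meson less_imp_le add_left_mono mult_left_mono order_trans powr_mono2 add_nonneg_nonneg zero_le_one)
    then have "real_of_int \<bar>\<tau>\<bar> \<le> 1 + norm (mean c) * (Cp * (1 + R') powr dp)"
      using norm_triangle_ineq4[of "symbol0 \<tau> \<xi>" "mean c * p \<xi>"] small
      by (simp add: symbol0_def norm_mult) (meson add_mono mult_left_mono norm_ge_zero order_trans)
    then show False using fnorm_le_sum[of \<tau> \<xi>] big lt by (simp add: mult.assoc)
  qed
  then show thesis using that by blast
qed

lemma small_symbol0_if_not_gh:
  assumes "\<not> globally_hypoelliptic (L0op c p :: 'n coef \<Rightarrow> 'n coef)"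
  shows "\<exists>\<tau> \<xi>. inorm \<xi> \<ge> R \<and> norm (symbol0 \<tau> \<xi>) \<le> (1 + fnorm (\<tau>, \<xi>)) powr (- real N)"
proof -
  obtain u :: "'n coef" where u: "is_distribution u" "\<not> is_smooth u" and "is_smooth (L0op c p u)"
    using assms unfolding globally_hypoelliptic_def by blast
  moreover have "L0op c p u = (\<lambda>\<eta>. symbol0 (fst \<eta>) (snd \<eta>) * u \<eta>)"
    by (auto simp: L0op_eq_symbol0)
  ultimately have su: "is_smooth (\<lambda>\<eta>. symbol0 (fst \<eta>) (snd \<eta>) * u \<eta>)" by simp
  obtain R1 where R1: "\<And>\<tau> \<xi>. fnorm (\<tau>, \<xi>) > R1 \<Longrightarrow> norm (symbol0 \<tau> \<xi>) \<le> 1 \<Longrightarrow> inorm \<xi> \<ge> R"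
    using inorm_large_if_symbol0_small[where R=R] by blast
  obtain \<tau> \<xi> where big: "fnorm (\<tau>, \<xi>) > R1"
    and small: "norm (symbol0 \<tau> \<xi>) \<le> (1 + fnorm (\<tau>, \<xi>)) powr (- real N)"
    using small_multiplier_if_not_smooth[OF u su, of R1 N] by auto
  moreover have "(1 + fnorm (\<tau>, \<xi>)) powr (- real N) \<le> 1"
    using fnorm_nonneg[of "(\<tau>, \<xi>)"] by (simp add: powr_minus_divide ge_one_powr_ge_zero)
  ultimately show ?thesis using R1 by (meson order_trans)
qed

definition eigen_family :: "(nat \<Rightarrow> int) \<Rightarrow> (nat \<Rightarrow> int ^ 'n) \<Rightarrow> 'n coef" where
  "eigen_family tt xx = (\<lambda>(\<tau>, \<xi>). if \<xi> \<in> range xx then fcoef (eigenfun c (p \<xi>) (tt (inv xx \<xi>))) \<tau> else 0)"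

lemma eigen_family_apply: "eigen_family tt xx (\<tau>, \<xi>) = (if \<xi> \<in> range xx then fcoef (eigenfun c (p \<xi>) (tt (inv xx \<xi>))) \<tau> else 0)"
  by (simp add: eigen_family_def)

lemma eigen_family_distribution: "is_distribution (eigen_family tt xx)"
proof -
  have "norm (eigen_family tt xx \<eta>) \<le> 1 * (1 + fnorm \<eta>) ^ 0" for \<eta>
    by (cases \<eta>) (simp add: eigen_family_apply norm_fcoef_eigenfun_le_1[OF sc])
  then show ?thesis unfolding is_distribution_def by blast
qed

lemma Lop_eigen_family: "Lop c p (eigen_family tt xx) (\<tau>, \<xi>) =
   (if \<xi> \<in> range xx then symbol0 (tt (inv xx \<xi>)) \<xi> * fcoef (eigenfun c (p \<xi>) (tt (inv xx \<xi>))) \<tau> else 0)"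
proof -
  have L: "Lop c p (eigen_family tt xx) (\<tau>, \<xi>) = of_int \<tau> * eigen_family tt xx (\<tau>, \<xi>) +
      infsum (\<lambda>\<sigma>. fcoef c (\<tau> - \<sigma>) * (p \<xi> * eigen_family tt xx (\<sigma>, \<xi>))) UNIV"
    by (simp add: Lop_def Dt_def mult_t_def PDx_def)
  show ?thesis
  proof (cases "\<xi> \<in> range xx")
    case True
    define W where "W = fcoef (eigenfun c (p \<xi>) (tt (inv xx \<xi>)))"
    have "infsum (\<lambda>\<sigma>. fcoef c (\<tau> - \<sigma>) * (p \<xi> * eigen_family tt xx (\<sigma>, \<xi>))) UNIV =
          infsum (\<lambda>\<sigma>. p \<xi> * (fcoef c (\<tau> - \<sigma>) * W \<sigma>)) UNIV"
      using True by (simp add: eigen_family_apply W_def mult.left_commute)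
    also have "\<dots> = p \<xi> * infsum (\<lambda>\<sigma>. fcoef c (\<tau> - \<sigma>) * W \<sigma>) UNIV"
      by (rule infsum_cmult_right')
    finally have "Lop c p (eigen_family tt xx) (\<tau>, \<xi>) = of_int \<tau> * W \<tau> + p \<xi> * infsum (\<lambda>\<sigma>. fcoef c (\<tau> - \<sigma>) * W \<sigma>) UNIV"
      using L True by (simp add: eigen_family_apply W_def)
    also have "\<dots> = symbol0 (tt (inv xx \<xi>)) \<xi> * W \<tau>"
      unfolding W_def symbol0_def by (rule fcoef_eigenfun_eq[OF sc])
    finally show ?thesis using True by (simp add: W_def)
  next
    case False
    then show ?thesis using L by (simp add: eigen_family_apply)
  qed
qed

lemma norm_symbol0_fcoef_eigenfun_weighted_le:
  assumes Cp: "Cp \<ge> 0" "dp \<ge> 0" "\<And>\<xi>. norm (p \<xi>) \<le> Cp * (1 + inorm \<xi>) powr dp"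
  shows "\<exists>K\<ge>0. \<forall>\<tau>0 \<xi> \<tau>. norm (symbol0 \<tau>0 \<xi> * fcoef (eigenfun c (p \<xi>) \<tau>0) \<tau>) * (1 + fnorm (\<tau>, \<xi>)) ^ j
    \<le> K * norm (symbol0 \<tau>0 \<xi>) * (1 + fnorm (\<tau>0, \<xi>)) powr (real j + real j * dp)"
proof -
  obtain K where K: "K \<ge> 0"
    "\<And>q \<tau>0 \<sigma>. norm (fcoef (eigenfun c q \<tau>0) \<sigma>) * (1 + real_of_int \<bar>\<sigma> - \<tau>0\<bar>) ^ j \<le> K * (1 + norm q) ^ j"
    using fcoef_eigenfun_decay[OF sc, of j] by blast
  have "norm (symbol0 \<tau>0 \<xi> * fcoef (eigenfun c (p \<xi>) \<tau>0) \<tau>) * (1 + fnorm (\<tau>, \<xi>)) ^ j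
    \<le> K * (1 + Cp) ^ j * norm (symbol0 \<tau>0 \<xi>) * (1 + fnorm (\<tau>0, \<xi>)) powr (real j + real j * dp)" for \<tau>0 \<xi> \<tau>
  proof -
    define W where "W = fcoef (eigenfun c (p \<xi>) \<tau>0)"
    define F0 where "F0 = 1 + fnorm (\<tau>0, \<xi>)"
    define x where "x = real_of_int \<bar>\<tau> - \<tau>0\<bar>"
    have F0: "F0 \<ge> 1" unfolding F0_def using fnorm_nonneg[of "(\<tau>0, \<xi>)"] by simp
    have x: "x \<ge> 0" unfolding x_def by simp
    have peetre: "(1 + fnorm (\<tau>, \<xi>)) ^ j \<le> (1 + x) ^ j * F0 ^ j"
      unfolding power_mult_distrib[symmetric] x_def F0_def
      by (rule power_mono[OF peetre_fnorm]) (use fnorm_nonneg[of "(\<tau>, \<xi>)"] in simp)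
    have growth: "(1 + norm (p \<xi>)) ^ j \<le> (1 + Cp) ^ j * F0 powr (real j * dp)"
      using inorm_le_fnorm[of \<xi> \<tau>0] unfolding F0_def by (intro poly_growth_power_le[OF Cp]) simp
    have "norm (symbol0 \<tau>0 \<xi> * W \<tau>) * (1 + fnorm (\<tau>, \<xi>)) ^ j
        \<le> norm (symbol0 \<tau>0 \<xi>) * (norm (W \<tau>) * (1 + x) ^ j) * F0 ^ j"
      unfolding norm_mult using mult_left_mono[OF peetre, of "norm (symbol0 \<tau>0 \<xi>) * norm (W \<tau>)"]
      by (simp add: mult_ac)
    also have "\<dots> \<le> norm (symbol0 \<tau>0 \<xi>) * (K * ((1 + Cp) ^ j * F0 powr (real j * dp))) * F0 ^ j"
    proof -
      have "norm (W \<tau>) * (1 + x) ^ j \<le> K * (1 + norm (p \<xi>)) ^ j"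
        unfolding W_def x_def by (rule K(2))
      also have "\<dots> \<le> K * ((1 + Cp) ^ j * F0 powr (real j * dp))"
        using growth K(1) by (rule mult_left_mono)
      finally show ?thesis using F0 by (intro mult_right_mono mult_left_mono) auto
    qed
    also have "\<dots> = K * (1 + Cp) ^ j * norm (symbol0 \<tau>0 \<xi>) * F0 powr (real j + real j * dp)"
      using F0 by (simp add: powr_realpow[symmetric] powr_add mult_ac)
    finally show ?thesis unfolding W_def F0_def .
  qed
  then show ?thesis using K(1) Cp(1) by (intro exI[of _ "K * (1 + Cp) ^ j"]) auto
qed

lemma Lop_eigen_family_smooth:
  assumes small: "\<And>k. norm (symbol0 (tt k) (xx k)) \<le> (1 + fnorm (tt k, xx k)) powr (- real k)"
  shows "is_smooth (Lop c p (eigen_family tt xx))"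
proof -
  obtain Cp dp where Cp: "Cp \<ge> 0" "dp \<ge> 0" "\<And>\<xi>. norm (p \<xi>) \<le> Cp * (1 + inorm \<xi>) powr dp"
    using poly_growth_bound[OF pg] by blast
  have order_j: "order_le (Lop c p (eigen_family tt xx)) (- real j)" for j :: nat
  proof -
    define G where "G = real j + real j * dp"
    obtain K where K: "K \<ge> 0" "\<And>\<tau>0 \<xi> \<tau>. norm (symbol0 \<tau>0 \<xi> * fcoef (eigenfun c (p \<xi>) \<tau>0) \<tau>) *
        (1 + fnorm (\<tau>, \<xi>)) ^ j \<le> K * norm (symbol0 \<tau>0 \<xi>) * (1 + fnorm (\<tau>0, \<xi>)) powr G"
      using norm_symbol0_fcoef_eigenfun_weighted_le[OF Cp, of j] unfolding G_def by blast
    obtain M where M: "M \<ge> 0" "\<And>k. (1 + fnorm (tt k, xx k)) powr (G - real k) \<le> M"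
      using powr_diff_index_bounded[of "\<lambda>k. 1 + fnorm (tt k, xx k)" G] fnorm_nonneg by force
    have "norm (Lop c p (eigen_family tt xx) (\<tau>, \<xi>)) * (1 + fnorm (\<tau>, \<xi>)) ^ j \<le> K * M" for \<tau> \<xi>
    proof (cases "\<xi> \<in> range xx")
      case True
      define k where "k = inv xx \<xi>"
      define F0 where "F0 = 1 + fnorm (tt k, \<xi>)"
      have xk: "xx k = \<xi>" unfolding k_def by (rule f_inv_into_f[OF True])
      have F0: "F0 \<ge> 1" unfolding F0_def using fnorm_nonneg[of "(tt k, \<xi>)"] by simp
      have "norm (Lop c p (eigen_family tt xx) (\<tau>, \<xi>)) * (1 + fnorm (\<tau>, \<xi>)) ^ j
          \<le> K * norm (symbol0 (tt k) \<xi>) * F0 powr G"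
        using K(2)[of "tt k" \<xi> \<tau>] True unfolding F0_def k_def by (simp add: Lop_eigen_family)
      also have "\<dots> \<le> K * F0 powr (- real k) * F0 powr G"
        using small[of k] K(1) unfolding xk F0_def by (intro mult_right_mono mult_left_mono) auto
      also have "\<dots> = K * F0 powr (G - real k)"
        using F0 by (simp add: powr_add[symmetric] mult.assoc)
      also have "\<dots> \<le> K * M"
        using M(2)[of k] K(1) unfolding F0_def xk by (intro mult_left_mono) auto
      finally show ?thesis .
    qed (use K(1) M(1) in \<open>simp add: Lop_eigen_family\<close>)
    then have "norm (Lop c p (eigen_family tt xx) \<eta>) \<le> K * M * (1 + fnorm \<eta>) powr (- real j)" for \<eta>
      using fnorm_nonneg[of \<eta>] by (cases \<eta>) (auto intro: le_mult_powr_minus_if_mult_power_le)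
    then show ?thesis unfolding order_le_def by blast
  qed
  have "order_le (Lop c p (eigen_family tt xx)) R" for R
    by (rule order_le_mono[OF order_j[of "nat \<lceil>- R\<rceil>"]]) linarith
  then show ?thesis unfolding is_smooth_iff_order_le by blast
qed

lemma inorm_bounded_if_eigen_family_smooth:
  assumes sm: "is_smooth (eigen_family tt xx)"
  shows "\<exists>Q. \<forall>k. 1 + inorm (xx k) \<le> Q"
proof -
  obtain Cp dp where Cp: "Cp \<ge> 0" "dp \<ge> 0" "\<And>\<xi>. norm (p \<xi>) \<le> Cp * (1 + inorm \<xi>) powr dp"
    using poly_growth_bound[OF pg] by blast
  obtain L where L: "L > 0" "\<And>q \<tau>0. \<exists>\<sigma>. L / (1 + norm q) ^ 4 \<le> norm (fcoef (eigenfun c q \<tau>0) \<sigma>)"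
    using fcoef_eigenfun_lower_bound[OF sc] by blast
  have "order_le (eigen_family tt xx) (- (4 * dp + 1))" using sm unfolding is_smooth_iff_order_le by blast
  then obtain A where A: "A \<ge> 0" "\<And>\<eta>. norm (eigen_family tt xx \<eta>) \<le> A * (1 + fnorm \<eta>) powr (- (4 * dp + 1))"
    using order_leE by blast
  define Q where "Q = A * (1 + Cp) ^ 4 / L"
  have bound: "1 + inorm (xx k) \<le> Q" for k
  proof -
    define \<xi> where "\<xi> = xx k"
    have rng: "\<xi> \<in> range xx" unfolding \<xi>_def by simp
    define I where "I = 1 + inorm \<xi>"
    have I: "I \<ge> 1" unfolding I_def using inorm_nonneg[of \<xi>] by simp
    obtain \<sigma> where \<sigma>: "L / (1 + norm (p \<xi>)) ^ 4 \<le> norm (fcoef (eigenfun c (p \<xi>) (tt (inv xx \<xi>))) \<sigma>)"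
      using L(2) by blast
    have "norm (fcoef (eigenfun c (p \<xi>) (tt (inv xx \<xi>))) \<sigma>) = norm (eigen_family tt xx (\<sigma>, \<xi>))"
      using rng by (simp add: eigen_family_apply)
    also have "\<dots> \<le> A * (1 + fnorm (\<sigma>, \<xi>)) powr (- (4 * dp + 1))" by (rule A(2))
    also have "\<dots> \<le> A * I powr (- (4 * dp + 1))"
      unfolding I_def using inorm_le_fnorm[of \<xi> \<sigma>] inorm_nonneg[of \<xi>] Cp(2) A(1)
      by (intro mult_left_mono powr_mono2') auto
    finally have 1: "L / (1 + norm (p \<xi>)) ^ 4 \<le> A * I powr (- (4 * dp + 1))" using \<sigma> by simp
    have pq: "(1 + norm (p \<xi>)) ^ 4 \<le> (1 + Cp) ^ 4 * I powr (4 * dp)"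
      using poly_growth_power_le[OF Cp, of \<xi> I 4] unfolding I_def by simp
    have pq0: "(1 + norm (p \<xi>)) ^ 4 > 0" by (smt (verit) norm_ge_zero zero_less_power)
    have "L \<le> A * I powr (- (4 * dp + 1)) * (1 + norm (p \<xi>)) ^ 4"
      using 1 pq0 by (simp add: field_simps)
    also have "\<dots> \<le> A * I powr (- (4 * dp + 1)) * ((1 + Cp) ^ 4 * I powr (4 * dp))"
      using pq A(1) by (intro mult_left_mono) auto
    also have "\<dots> = A * (1 + Cp) ^ 4 * I powr (- 1)"
      using I by (simp add: powr_add[symmetric] mult_ac)
    finally have "L \<le> A * (1 + Cp) ^ 4 / I" using I by (simp add: powr_minus divide_inverse)
    then have "L * I \<le> A * (1 + Cp) ^ 4" using I by (simp add: field_simps)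
    then show ?thesis unfolding Q_def I_def \<xi>_def using L(1) by (simp add: field_simps)
  qed
  then show ?thesis by blast
qed

lemma eigen_family_not_smooth:
  assumes "\<And>k. inorm (xx k) \<ge> real k"
  shows "\<not> is_smooth (eigen_family tt xx)"
proof
  assume "is_smooth (eigen_family tt xx)"
  then obtain Q where "\<And>k. 1 + inorm (xx k) \<le> Q"
    using inorm_bounded_if_eigen_family_smooth by blast
  then have "1 + real (nat \<lceil>Q\<rceil>) \<le> Q" using assms[of "nat \<lceil>Q\<rceil>"] by (meson add_left_mono order_trans)
  then show False by linarith
qed

lemma not_gh_L0op_imp_not_gh_Lop:
  assumes ngh: "\<not> globally_hypoelliptic (L0op c p :: 'n coef \<Rightarrow> 'n coef)"
  shows "\<not> globally_hypoelliptic (Lop c p :: 'n coef \<Rightarrow> 'n coef)"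
proof -
  have "\<forall>k::nat. \<exists>\<tau> \<xi>. inorm \<xi> \<ge> real k \<and> norm (symbol0 \<tau> \<xi>) \<le> (1 + fnorm (\<tau>, \<xi>)) powr (- real k)"
    using small_symbol0_if_not_gh[OF ngh] by blast
  then have "\<forall>k::nat. \<exists>z. inorm (snd z) \<ge> real k \<and> norm (symbol0 (fst z) (snd z)) \<le> (1 + fnorm (fst z, snd z)) powr (- real k)"
    by simp
  then obtain f where f: "\<forall>k::nat. inorm (snd (f k)) \<ge> real k \<and> norm (symbol0 (fst (f k)) (snd (f k))) \<le> (1 + fnorm (fst (f k), snd (f k))) powr (- real k)"
    by (rule choice[THEN exE])
  define tt where "tt k = fst (f k)" for k
  define xx where "xx k = snd (f k)" for k
  have seq: "inorm (xx k) \<ge> real k \<and> norm (symbol0 (tt k) (xx k)) \<le> (1 + fnorm (tt k, xx k)) powr (- real k)" for k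
    using f unfolding tt_def xx_def by blast
  have "is_distribution (eigen_family tt xx)" by (rule eigen_family_distribution)
  moreover have "is_smooth (Lop c p (eigen_family tt xx))" by (rule Lop_eigen_family_smooth) (use seq in auto)
  moreover have "\<not> is_smooth (eigen_family tt xx)" by (rule eigen_family_not_smooth) (use seq in auto)
  ultimately show ?thesis unfolding globally_hypoelliptic_def by blast
qed

end

section \<open>Compositions\<close>

lemma globally_hypoelliptic_comp_imp_right:
  assumes "finite_order A" "globally_hypoelliptic (A \<circ> B)"
  shows "globally_hypoelliptic B"
  using assms finite_order_smooth unfolding globally_hypoelliptic_def by (metis comp_apply)

lemma globally_hypoelliptic_comp:
  assumes "globally_hypoelliptic A" "globally_hypoelliptic B" "finite_order B"
  shows "globally_hypoelliptic (A \<circ> B)"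
  using assms finite_order_distribution unfolding globally_hypoelliptic_def by (metis comp_apply)

lemma globally_hypoelliptic_id: "globally_hypoelliptic (\<lambda>x. x)" unfolding globally_hypoelliptic_def by simp

lemma comp_list_Cons: "comp_list (f # fs) = f \<circ> comp_list fs"
  by (simp add: comp_list_def)

lemma foldr_comp_shift: "foldr (\<circ>) xs g = foldr (\<circ>) xs id \<circ> g"
  by (induction xs) auto

lemma comp_list_snoc: "comp_list (xs @ [g]) = comp_list xs \<circ> g"
  unfolding comp_list_def by (simp add: foldr_comp_shift[of xs g])

lemma globally_hypoelliptic_comp_list:
  "(\<And>f. f \<in> set fs \<Longrightarrow> globally_hypoelliptic f \<and> finite_order f) \<Longrightarrow> globally_hypoelliptic (comp_list fs)"
proof (induction fs)
  case Nil
  then show ?case by (simp add: comp_list_def globally_hypoelliptic_id)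
next
  case (Cons f fs)
  have "globally_hypoelliptic (f \<circ> comp_list fs)"
    using Cons by (intro globally_hypoelliptic_comp finite_order_comp_list) auto
  then show ?case by (simp add: comp_list_Cons o_def)
qed

lemma globally_hypoelliptic_L0op_finite:
  fixes p :: "int ^ ('n::finite) \<Rightarrow> complex"
  assumes gh: "globally_hypoelliptic (L0op c p :: 'n coef \<Rightarrow> 'n coef)"
  shows "finite {\<xi>. mean c * p \<xi> \<in> \<int>}"
proof (rule ccontr)
  define S where "S = {\<xi>. mean c * p \<xi> \<in> \<int>}"
  assume inf: "\<not> finite {\<xi>. mean c * p \<xi> \<in> \<int>}"
  define u :: "'n coef" where "u = (\<lambda>(\<tau>, \<xi>). if \<xi> \<in> S \<and> of_int \<tau> = - (mean c * p \<xi>) then 1 else 0)"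
  have ud: "is_distribution u"
  proof -
    have "norm (u \<eta>) \<le> 1 * (1 + fnorm \<eta>) ^ 0" for \<eta> by (cases \<eta>) (auto simp: u_def)
    then show ?thesis unfolding is_distribution_def by blast
  qed
  have "L0op c p u = (\<lambda>_. 0)"
  proof
    fix \<eta> show "L0op c p u \<eta> = 0"
    proof (cases \<eta>)
      case (Pair \<tau> \<xi>)
      then show ?thesis
        by (auto simp: L0op_def Dt_def PDx_def u_def algebra_simps)
    qed
  qed
  then have "is_smooth (L0op c p u)" unfolding is_smooth_def by (auto intro: exI[of _ 0])
  with gh ud have us: "is_smooth u" unfolding globally_hypoelliptic_def by blast
  then obtain C where C: "\<And>\<eta>. cmod (u \<eta>) \<le> C * (1 + fnorm \<eta>) powr (- real 1)"
    unfolding is_smooth_def by blast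
  have "S \<subseteq> {\<xi>. inorm \<xi> \<le> C}"
  proof
    fix \<xi> assume "\<xi> \<in> S"
    then obtain z where z: "mean c * p \<xi> = of_int z" unfolding S_def by (auto elim: Ints_cases)
    have "u (-z, \<xi>) = 1" using \<open>\<xi> \<in> S\<close> z by (simp add: u_def)
    then have "1 \<le> C * (1 + fnorm (-z, \<xi>)) powr (- 1)" using C[of "(-z, \<xi>)"] by simp
    then have "1 + fnorm (-z, \<xi>) \<le> C" using fnorm_nonneg[of "(-z, \<xi>)"]
      by (simp add: powr_minus field_simps add_pos_nonneg)
    then show "\<xi> \<in> {\<xi>. inorm \<xi> \<le> C}" using inorm_le_fnorm[of \<xi> "-z"] by simp
  qed
  then have "finite S" using finite_inorm_le finite_subset by blast
  then show False using inf S_def by simp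
qed

lemma globally_hypoelliptic_Lop_imp_L0op:
  fixes p :: "int ^ ('n::finite) \<Rightarrow> complex"
  assumes "smooth_periodic c" "poly_growth p" "globally_hypoelliptic (Lop c p :: 'n coef \<Rightarrow> 'n coef)"
  shows "globally_hypoelliptic (L0op c p :: 'n coef \<Rightarrow> 'n coef)"
  using not_gh_L0op_imp_not_gh_Lop[OF assms(1,2)] assms(3) by blast

lemma globally_hypoelliptic_comp_list_imp_last:
  assumes "globally_hypoelliptic (comp_list (fs @ [g]))" "\<And>f. f \<in> set fs \<Longrightarrow> finite_order f"
  shows "globally_hypoelliptic g"
proof -
  have "finite_order (comp_list fs)" using assms(2) by (rule finite_order_comp_list)
  then show ?thesis
    using assms(1) globally_hypoelliptic_comp_imp_right by (metis comp_list_snoc)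
qed

lemma globally_hypoelliptic_perm_imp_L0op_last:
  fixes c :: "nat \<Rightarrow> real \<Rightarrow> complex" and p :: "nat \<Rightarrow> int ^ 'n::finite \<Rightarrow> complex"
  assumes "m \<ge> 1" "\<And>j. j < m \<Longrightarrow> smooth_periodic (c j)" "\<And>j. j < m \<Longrightarrow> poly_growth (p j)"
    and \<rho>: "\<rho> permutes {..<m}"
    and gh: "globally_hypoelliptic (comp_list (map (\<lambda>i. Lop (c (\<rho> i)) (p (\<rho> i))) [0..<m]))"
  shows "globally_hypoelliptic (L0op (c (\<rho> (m - 1))) (p (\<rho> (m - 1))))"
proof -
  have \<rho>_less: "\<rho> i < m" if "i < m" for i using permutes_in_image[OF \<rho>, of i] that by simp
  let ?L = "\<lambda>i. Lop (c (\<rho> i)) (p (\<rho> i))"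
  have "globally_hypoelliptic (?L (m - 1))"
  proof (rule globally_hypoelliptic_comp_list_imp_last)
    have "[0..<m] = [0..<m - 1] @ [m - 1]" using assms(1) by (cases m) auto
    then show "globally_hypoelliptic (comp_list (map ?L [0..<m - 1] @ [?L (m - 1)]))"
      using gh by simp
    fix f assume "f \<in> set (map ?L [0..<m - 1])"
    then obtain i where "i < m - 1" "f = ?L i" by auto
    then show "finite_order f" using \<rho>_less[of i] assms(2,3) by (simp add: finite_order_Lop)
  qed
  then show ?thesis
    using assms(1-3) \<rho>_less[of "m - 1"] by (intro globally_hypoelliptic_Lop_imp_L0op) auto
qed

lemma globally_hypoelliptic_all_perms_imp_L0op:
  fixes c :: "nat \<Rightarrow> real \<Rightarrow> complex" and p :: "nat \<Rightarrow> int ^ 'n::finite \<Rightarrow> complex"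
  assumes "m \<ge> 1" "\<And>j. j < m \<Longrightarrow> smooth_periodic (c j)" "\<And>j. j < m \<Longrightarrow> poly_growth (p j)"
    and all: "\<forall>\<rho>. \<rho> permutes {..<m} \<longrightarrow>
      globally_hypoelliptic (comp_list (map (\<lambda>i. Lop (c (\<rho> i)) (p (\<rho> i))) [0..<m]))"
    and j: "j < m"
  shows "globally_hypoelliptic (L0op (c j) (p j))"
proof -
  define \<rho> where "\<rho> = Transposition.transpose j (m - 1)"
  have "\<rho> permutes {..<m}" unfolding \<rho>_def using assms(1) j by (intro permutes_swap_id) auto
  then have "globally_hypoelliptic (L0op (c (\<rho> (m - 1))) (p (\<rho> (m - 1))))"
    using all by (intro globally_hypoelliptic_perm_imp_L0op_last[where c=c and p=p, OF assms(1-3)]) auto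
  then show ?thesis by (simp add: \<rho>_def)
qed

theorem proposition4:
  fixes m :: nat
    and c :: "nat \<Rightarrow> real \<Rightarrow> complex"
    and p :: "nat \<Rightarrow> int ^ 'n \<Rightarrow> complex"
  assumes m_pos: "m \<ge> 1"
    and c_smooth: "\<forall>j<m. smooth_periodic (c j)"
    and p_growth: "\<forall>j<m. \<exists>C>0. \<exists>\<nu>::real. \<forall>\<xi>. \<xi> \<noteq> 0 \<longrightarrow> cmod (p j \<xi>) \<le> C * inorm \<xi> powr \<nu>"
  shows "((\<forall>\<rho>. \<rho> permutes {..<m} \<longrightarrow>
            globally_hypoelliptic (comp_list (map (\<lambda>i. Lop (c (\<rho> i)) (p (\<rho> i))) [0..<m])))
          \<longrightarrow> globally_hypoelliptic (comp_list (map (\<lambda>j. L0op (c j) (p j)) [0..<m]))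
              \<and> (\<forall>k<m. finite {\<xi>. mean (c k) * p k \<xi> \<in> \<int>}))
       \<and> ((\<exists>\<rho>. \<rho> permutes {..<m} \<and>
            globally_hypoelliptic (comp_list (map (\<lambda>i. Lop (c (\<rho> i)) (p (\<rho> i))) [0..<m])))
          \<longrightarrow> (\<exists>k<m. globally_hypoelliptic (L0op (c k) (p k))))"
proof (intro conjI impI)
  let ?L\<rho> = "\<lambda>\<rho>. comp_list (map (\<lambda>i. Lop (c (\<rho> i)) (p (\<rho> i))) [0..<m])"
  have c: "\<And>j. j < m \<Longrightarrow> smooth_periodic (c j)" and pg: "\<And>j. j < m \<Longrightarrow> poly_growth (p j)"
    using c_smooth p_growth unfolding poly_growth_def by auto
  {
    assume "\<forall>\<rho>. \<rho> permutes {..<m} \<longrightarrow> globally_hypoelliptic (?L\<rho> \<rho>)"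
    then have gh: "\<And>j. j < m \<Longrightarrow> globally_hypoelliptic (L0op (c j) (p j))"
      using globally_hypoelliptic_all_perms_imp_L0op[where c=c and p=p, OF m_pos c pg] by blast
    show "globally_hypoelliptic (comp_list (map (\<lambda>j. L0op (c j) (p j)) [0..<m]))"
      using gh pg by (intro globally_hypoelliptic_comp_list) (auto intro: finite_order_L0op)
    show "\<forall>k<m. finite {\<xi>. mean (c k) * p k \<xi> \<in> \<int>}"
      using gh globally_hypoelliptic_L0op_finite by blast
  next
    assume "\<exists>\<rho>. \<rho> permutes {..<m} \<and> globally_hypoelliptic (?L\<rho> \<rho>)"
    then obtain \<rho> where \<rho>: "\<rho> permutes {..<m}" and "globally_hypoelliptic (?L\<rho> \<rho>)" by blast
    then have "globally_hypoelliptic (L0op (c (\<rho> (m - 1))) (p (\<rho> (m - 1))))"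
      using globally_hypoelliptic_perm_imp_L0op_last[where c=c and p=p, OF m_pos c pg] by blast
    moreover have "\<rho> (m - 1) < m" using permutes_in_image[OF \<rho>, of "m - 1"] m_pos by simp
    ultimately show "\<exists>k<m. globally_hypoelliptic (L0op (c k) (p k))" by blast
  }
qed

end
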